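(* Let $(L,H)$ be a correspondence-cover of a cycle $C$ such that $|L(v)|\geq 2$ for all $v\in V(C)$ and $|L(v)|\geq 3$ for at least three vertices $v$ of $C$. Then $(L,H)$ has a fractional packing.
   Context: A correspondence-cover of a graph $G$ is a pair $(L,H)$ where $H$ is a graph and $L$ maps each $v\in V(G)$ to a subset $L(v)\subseteq V(H)$ such that: the sets $L(v)$ partition $V(H)$; each $L(v)$ induces a clique in $H$; if $uv\notin E(G)$ there are no edges of $H$ between $L(u)$ and $L(v)$; if $uv\in E(G)$ the edges of $H$ between $L(u)$ and $L(v)$ form a matching. An independent transversal is an independent set of $H$ containing exactly one vertex of each $L(v)$. A cover has a fractional packing if there is a probability distribution on independent transversals $I$ such that $\Pr(x\in I)=1/|L(v)|$ for every vertex $v$ and every $x\in L(v)$ (lists need not have equal sizes). *)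

theory Defs
  imports "HOL-Probability.Probability_Mass_Function"
begin

definition simple_graph :: "'a set \<Rightarrow> ('a \<Rightarrow> 'a \<Rightarrow> bool) \<Rightarrow> bool" where
  "simple_graph V E \<longleftrightarrow>
     (\<forall>x y. E x y \<longrightarrow> x \<in> V \<and> y \<in> V) \<and>
     (\<forall>x y. E x y \<longrightarrow> E y x) \<and>
     (\<forall>x. \<not> E x x)"

definition cycle_edge :: "nat \<Rightarrow> nat \<Rightarrow> nat \<Rightarrow> bool" where
  "cycle_edge n u v \<longleftrightarrow> u < n \<and> v < n \<and> (v = (u + 1) mod n \<or> u = (v + 1) mod n)"

definition corr_cover ::
  "'a set \<Rightarrow> ('a \<Rightarrow> 'a \<Rightarrow> bool) \<Rightarrow> ('a \<Rightarrow> 'b set) \<Rightarrow> 'b set \<Rightarrow> ('b \<Rightarrow> 'b \<Rightarrow> bool) \<Rightarrow> bool" where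
  "corr_cover VG EG L VH EH \<longleftrightarrow>
     simple_graph VH EH \<and>
     (\<Union>v\<in>VG. L v) = VH \<and>
     (\<forall>u\<in>VG. \<forall>v\<in>VG. u \<noteq> v \<longrightarrow> L u \<inter> L v = {}) \<and>
     (\<forall>v\<in>VG. \<forall>x\<in>L v. \<forall>y\<in>L v. x \<noteq> y \<longrightarrow> EH x y) \<and>
     (\<forall>u\<in>VG. \<forall>v\<in>VG. u \<noteq> v \<longrightarrow> \<not> EG u v \<longrightarrow> (\<forall>x\<in>L u. \<forall>y\<in>L v. \<not> EH x y)) \<and>
     (\<forall>u\<in>VG. \<forall>v\<in>VG. EG u v \<longrightarrow>
        (\<forall>x\<in>L u. \<forall>y\<in>L v. \<forall>y'\<in>L v. EH x y \<and> EH x y' \<longrightarrow> y = y'))"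

definition indep_transversal ::
  "'a set \<Rightarrow> ('a \<Rightarrow> 'b set) \<Rightarrow> 'b set \<Rightarrow> ('b \<Rightarrow> 'b \<Rightarrow> bool) \<Rightarrow> 'b set \<Rightarrow> bool" where
  "indep_transversal VG L VH EH I \<longleftrightarrow>
     I \<subseteq> VH \<and> (\<forall>x\<in>I. \<forall>y\<in>I. \<not> EH x y) \<and> (\<forall>v\<in>VG. card (I \<inter> L v) = 1)"

definition has_fractional_packing ::
  "'a set \<Rightarrow> ('a \<Rightarrow> 'b set) \<Rightarrow> 'b set \<Rightarrow> ('b \<Rightarrow> 'b \<Rightarrow> bool) \<Rightarrow> bool" where
  "has_fractional_packing VG L VH EH \<longleftrightarrow>
     (\<exists>p :: 'b set pmf.
        (\<forall>I\<in>set_pmf p. indep_transversal VG L VH EH I) \<and>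
        (\<forall>v\<in>VG. \<forall>x\<in>L v. measure_pmf.prob p {I. x \<in> I} = 1 / real (card (L v))))"

end

theory Submission
  imports Defs
begin

(* Averaging, over the colours x of a list L(v) with at least three colours, fractional packings
   of the covers obtained by deleting x gives a fractional packing of the whole cover. Iterating
   this reduces the theorem to covers with exactly three lists of size 3, all other lists having
   size 2. The three rich vertices cut the cycle into three paths. On a path whose inner lists
   have size 2, each colour of the first inner vertex propagates in a unique edge-free way to the
   end of the path, so the path only constrains the colours at its two ends and one bit; after
   labelling the colours of the rich vertices by {0,1,2}, the three paths become a constraint
   pattern from a finite list. For each of the 384 patterns, a certificate checked by evaluation
   lists six admissible choices in which every label is used twice and every bit three times; the
   uniform distribution on the six corresponding independent transversals is a fractional
   packing. *)

lemma measure_bind_pmf_of_set: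
  assumes "finite A" "A \<noteq> {}"
  shows "measure_pmf.prob (pmf_of_set A \<bind> f) X = (\<Sum>a\<in>A. measure_pmf.prob (f a) X) / card A"
proof -
  have "emeasure (measure_pmf (pmf_of_set A \<bind> f)) X = (\<integral>\<^sup>+a. emeasure (measure_pmf (f a)) X \<partial>(pmf_of_set A))"
    by (rule emeasure_bind_pmf)
  also have "\<dots> = (\<Sum>a\<in>A. emeasure (measure_pmf (f a)) X) / card A"
    by (rule nn_integral_pmf_of_set[OF assms(2) assms(1)])
  also have "\<dots> = ennreal ((\<Sum>a\<in>A. measure_pmf.prob (f a) X) / card A)"
  proof -
    have "(\<Sum>a\<in>A. emeasure (measure_pmf (f a)) X) = ennreal (\<Sum>a\<in>A. measure_pmf.prob (f a) X)"
      by (simp add: measure_pmf.emeasure_eq_measure sum_ennreal)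
    moreover have "ennreal (\<Sum>a\<in>A. measure_pmf.prob (f a) X) / ennreal (real (card A))
       = ennreal ((\<Sum>a\<in>A. measure_pmf.prob (f a) X) / real (card A))"
      by (rule divide_ennreal) (use assms in \<open>auto intro: sum_nonneg simp: card_gt_0_iff\<close>)
    ultimately show ?thesis
      by (simp add: ennreal_of_nat_eq_real_of_nat)
  qed
  finally have "ennreal (measure_pmf.prob (pmf_of_set A \<bind> f) X) =
     ennreal ((\<Sum>a\<in>A. measure_pmf.prob (f a) X) / real (card A))"
    by (simp add: measure_pmf.emeasure_eq_measure)
  then show ?thesis
    by (subst (asm) ennreal_inj) (auto intro!: divide_nonneg_nonneg sum_nonneg)
qed

lemma inj_on_card_eq_imp_bij_betw:
  assumes "inj_on h A" "h ` A \<subseteq> B" "finite B" "card A = card B"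
  shows "bij_betw h A B"
proof -
  have "card (h ` A) = card B"
    using assms by (simp add: card_image)
  then have "h ` A = B"
    using assms card_subset_eq by blast
  then show ?thesis
    using assms unfolding bij_betw_def by auto
qed

lemma inj_on_if_disjoint_images:
  assumes "inj_on \<phi> D" "inj_on \<psi> (A - D)" "\<psi> ` (A - D) \<inter> \<phi> ` D = {}"
  shows "inj_on (\<lambda>a. if a \<in> D then \<phi> a else \<psi> a) A"
proof (rule inj_onI)
  fix a a' assume a: "a \<in> A" "a' \<in> A" "(if a \<in> D then \<phi> a else \<psi> a) = (if a' \<in> D then \<phi> a' else \<psi> a')"
  show "a = a'"
  proof (cases "a \<in> D"; cases "a' \<in> D")
    assume "a \<in> D" "a' \<notin> D"
    then show ?thesis
      using a assms(3) by auto
  next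
    assume "a \<notin> D" "a' \<in> D"
    then show ?thesis
      using a assms(3) by force
  qed (use a assms(1,2) in \<open>auto dest: inj_onD\<close>)
qed

definition edge_injection :: "('b \<Rightarrow> 'b \<Rightarrow> bool) \<Rightarrow> 'b set \<Rightarrow> 'b set \<Rightarrow> ('b \<Rightarrow> 'b) \<Rightarrow> bool" where
  "edge_injection E A B h \<longleftrightarrow> inj_on h A \<and> h ` A \<subseteq> B \<and> (\<forall>a\<in>A. \<forall>b\<in>B. E a b \<longrightarrow> h a = b)"

lemma matching_extends_to_injection:
  assumes "finite A" "finite B" "card A \<le> card B"
    and func: "\<And>a b b'. a \<in> A \<Longrightarrow> b \<in> B \<Longrightarrow> b' \<in> B \<Longrightarrow> R a b \<Longrightarrow> R a b' \<Longrightarrow> b = b'"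
    and inj: "\<And>a a' b. a \<in> A \<Longrightarrow> a' \<in> A \<Longrightarrow> b \<in> B \<Longrightarrow> R a b \<Longrightarrow> R a' b \<Longrightarrow> a = a'"
  shows "\<exists>h. edge_injection R A B h"
proof -
  define D where "D = {a\<in>A. \<exists>b\<in>B. R a b}"
  define \<phi> where "\<phi> a = (THE b. b \<in> B \<and> R a b)" for a
  have \<phi>: "\<phi> a \<in> B \<and> R a (\<phi> a)" if "a \<in> D" for a
  proof -
    have "\<exists>!b. b \<in> B \<and> R a b"
      using that func unfolding D_def by blast
    then show ?thesis
      unfolding \<phi>_def by (rule theI')
  qed
  have inj_\<phi>: "inj_on \<phi> D"
  proof (rule inj_onI)
    fix a a' assume "a \<in> D" "a' \<in> D" "\<phi> a = \<phi> a'"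
    then show "a = a'"
      using \<phi>[of a] \<phi>[of a'] inj unfolding D_def by auto
  qed
  have "D \<subseteq> A" "\<phi> ` D \<subseteq> B"
    using \<phi> unfolding D_def by auto
  then have "card (A - D) \<le> card (B - \<phi> ` D)"
    using assms(1-3) inj_\<phi> by (simp add: card_Diff_subset card_image finite_subset)
  then obtain \<psi> where \<psi>: "inj_on \<psi> (A - D)" "\<psi> ` (A - D) \<subseteq> B - \<phi> ` D"
    using card_le_inj[of "A - D" "B - \<phi> ` D"] assms(1,2) by auto
  define h where "h a = (if a \<in> D then \<phi> a else \<psi> a)" for a
  have "inj_on h A"
    unfolding h_def using inj_on_if_disjoint_images[OF inj_\<phi> \<psi>(1)] \<psi>(2) by blast
  moreover have "h ` A \<subseteq> B"
    using \<phi> \<psi> unfolding h_def by auto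
  moreover have "h a = b" if "a \<in> A" "b \<in> B" "R a b" for a b
  proof -
    have "a \<in> D"
      using that unfolding D_def by auto
    then show ?thesis
      using \<phi> func that unfolding h_def by auto
  qed
  ultimately show ?thesis
    unfolding edge_injection_def by blast
qed

lemma simple_graph_sym: "simple_graph V E \<Longrightarrow> E x y \<Longrightarrow> E y x"
  unfolding simple_graph_def by blast

lemma simple_graph_irrefl: "simple_graph V E \<Longrightarrow> \<not> E x x"
  unfolding simple_graph_def by blast

lemma simple_graph_edge_in: "simple_graph V E \<Longrightarrow> E x y \<Longrightarrow> x \<in> V \<and> y \<in> V"
  unfolding simple_graph_def by blast

context
  fixes VG EG L VH EH
  assumes cov: "corr_cover VG EG L VH EH"
begin

lemma corr_cover_simple_graph: "simple_graph VH EH"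
  using cov unfolding corr_cover_def by simp

lemma corr_cover_Union: "(\<Union>v\<in>VG. L v) = VH"
  using cov unfolding corr_cover_def by simp

lemma corr_cover_disjoint: "u \<in> VG \<Longrightarrow> v \<in> VG \<Longrightarrow> u \<noteq> v \<Longrightarrow> L u \<inter> L v = {}"
  using cov unfolding corr_cover_def by simp

lemma corr_cover_clique: "v \<in> VG \<Longrightarrow> x \<in> L v \<Longrightarrow> y \<in> L v \<Longrightarrow> x \<noteq> y \<Longrightarrow> EH x y"
  using cov unfolding corr_cover_def by simp

lemma corr_cover_non_edge:
  "u \<in> VG \<Longrightarrow> v \<in> VG \<Longrightarrow> u \<noteq> v \<Longrightarrow> \<not> EG u v \<Longrightarrow> x \<in> L u \<Longrightarrow> y \<in> L v \<Longrightarrow> \<not> EH x y"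
  using cov unfolding corr_cover_def by blast

lemma corr_cover_matching:
  "u \<in> VG \<Longrightarrow> v \<in> VG \<Longrightarrow> EG u v \<Longrightarrow> x \<in> L u \<Longrightarrow> y \<in> L v \<Longrightarrow> y' \<in> L v
   \<Longrightarrow> EH x y \<Longrightarrow> EH x y' \<Longrightarrow> y = y'"
  using cov unfolding corr_cover_def by blast

lemma corr_cover_matching':
  "u \<in> VG \<Longrightarrow> v \<in> VG \<Longrightarrow> EG v u \<Longrightarrow> x \<in> L u \<Longrightarrow> x' \<in> L u \<Longrightarrow> y \<in> L v
   \<Longrightarrow> EH x y \<Longrightarrow> EH x' y \<Longrightarrow> x = x'"
  using corr_cover_matching[of v u y x x'] simple_graph_sym[OF corr_cover_simple_graph] by blast

end

definition edges_avoiding :: "('b \<Rightarrow> 'b \<Rightarrow> bool) \<Rightarrow> 'b \<Rightarrow> 'b \<Rightarrow> 'b \<Rightarrow> bool" where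
  "edges_avoiding EH x a b \<longleftrightarrow> EH a b \<and> a \<noteq> x \<and> b \<noteq> x"

lemma corr_cover_delete_colour:
  assumes cov: "corr_cover VG EG L VH EH" and v: "v \<in> VG" and x: "x \<in> L v"
  shows "corr_cover VG EG (L(v := L v - {x})) (VH - {x}) (edges_avoiding EH x)"
proof -
  let ?L = "L(v := L v - {x})"
  have x_only_at_v: "x \<notin> L u" if "u \<in> VG" "u \<noteq> v" for u
    using corr_cover_disjoint[OF cov that(1) v that(2)] x by blast
  have sub: "?L u \<subseteq> L u" for u
    by auto
  have sg: "simple_graph VH EH"
    using corr_cover_simple_graph[OF cov] .
  show ?thesis
    unfolding corr_cover_def
  proof (intro conjI)
    show "simple_graph (VH - {x}) (edges_avoiding EH x)"
      using simple_graph_edge_in[OF sg] simple_graph_sym[OF sg] simple_graph_irrefl[OF sg]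
      unfolding simple_graph_def edges_avoiding_def by blast
    show "(\<Union>u\<in>VG. ?L u) = VH - {x}"
      using corr_cover_Union[OF cov] x_only_at_v v by (auto split: if_splits)
    show "\<forall>u\<in>VG. \<forall>w\<in>VG. u \<noteq> w \<longrightarrow> ?L u \<inter> ?L w = {}"
      using corr_cover_disjoint[OF cov] sub by blast
    show "\<forall>w\<in>VG. \<forall>a\<in>?L w. \<forall>b\<in>?L w. a \<noteq> b \<longrightarrow> edges_avoiding EH x a b"
      unfolding edges_avoiding_def using corr_cover_clique[OF cov] sub x_only_at_v
      by (auto split: if_splits)
    show "\<forall>u\<in>VG. \<forall>w\<in>VG. u \<noteq> w \<longrightarrow> \<not> EG u w \<longrightarrow>
        (\<forall>a\<in>?L u. \<forall>b\<in>?L w. \<not> edges_avoiding EH x a b)"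
      unfolding edges_avoiding_def using corr_cover_non_edge[OF cov] sub by blast
    show "\<forall>u\<in>VG. \<forall>w\<in>VG. EG u w \<longrightarrow> (\<forall>a\<in>?L u. \<forall>b\<in>?L w. \<forall>b'\<in>?L w.
        edges_avoiding EH x a b \<and> edges_avoiding EH x a b' \<longrightarrow> b = b')"
      unfolding edges_avoiding_def using corr_cover_matching[OF cov] sub by blast
  qed
qed

lemma indep_transversal_delete_colour:
  assumes "indep_transversal VG (L(v := L v - {x})) (VH - {x}) (edges_avoiding EH x) I"
  shows "indep_transversal VG L VH EH I"
proof -
  have I: "I \<subseteq> VH - {x}"
    using assms unfolding indep_transversal_def by auto
  then have "I \<inter> (L(v := L v - {x})) u = I \<inter> L u" for u
    by auto
  moreover have "\<not> EH a b" if "a \<in> I" "b \<in> I" for a b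
    using assms I that unfolding indep_transversal_def edges_avoiding_def by blast
  ultimately show ?thesis
    using assms I unfolding indep_transversal_def by auto
qed

lemma sum_eq_one_off_point:
  fixes f :: "'a \<Rightarrow> real"
  assumes "finite A" "y \<in> A" "card A \<ge> 2" "f y = 0"
    and "\<And>x. x \<in> A - {y} \<Longrightarrow> f x = 1 / real (card A - 1)"
  shows "(\<Sum>x\<in>A. f x) = 1"
proof -
  have "(\<Sum>x\<in>A. f x) = (\<Sum>x\<in>A - {y}. 1 / real (card A - 1))"
    using assms by (simp add: sum.remove[of A y])
  also have "\<dots> = 1"
    using assms by (simp add: card_Diff_singleton of_nat_diff)
  finally show ?thesis .
qed

text \<open>Average, over the colours \<open>x \<in> L v\<close>, packings of the covers with \<open>x\<close> deleted: a colour of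
  \<open>L v\<close> then has probability \<open>(1/|L v|) \<cdot> (|L v| - 1) \<cdot> 1/(|L v| - 1)\<close>.\<close>

lemma fractional_packing_from_deletions:
  assumes cov: "corr_cover VG EG L VH EH" and v: "v \<in> VG" and fin: "finite (L v)"
    and two: "card (L v) \<ge> 2"
    and deletions: "\<And>x. x \<in> L v \<Longrightarrow>
      has_fractional_packing VG (L(v := L v - {x})) (VH - {x}) (edges_avoiding EH x)"
  shows "has_fractional_packing VG L VH EH"
proof -
  obtain p where p_trans: "\<And>x I. x \<in> L v \<Longrightarrow> I \<in> set_pmf (p x) \<Longrightarrow>
      indep_transversal VG (L(v := L v - {x})) (VH - {x}) (edges_avoiding EH x) I"
    and p_prob: "\<And>x u y. x \<in> L v \<Longrightarrow> u \<in> VG \<Longrightarrow> y \<in> (L(v := L v - {x})) u \<Longrightarrow>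
      measure_pmf.prob (p x) {I. y \<in> I} = 1 / real (card ((L(v := L v - {x})) u))"
    using deletions unfolding has_fractional_packing_def by metis
  have ne: "L v \<noteq> {}"
    using two by auto
  define q where "q = pmf_of_set (L v) \<bind> p"
  have "indep_transversal VG L VH EH I" if "I \<in> set_pmf q" for I
  proof -
    have "I \<in> (\<Union>x\<in>L v. set_pmf (p x))"
      using that fin ne unfolding q_def by simp
    then obtain x where "x \<in> L v" "I \<in> set_pmf (p x)"
      by blast
    then show ?thesis
      using p_trans by (blast intro: indep_transversal_delete_colour)
  qed
  moreover have "measure_pmf.prob q {I. y \<in> I} = 1 / real (card (L u))"
    if u: "u \<in> VG" and y: "y \<in> L u" for u y
  proof -
    have q_prob: "measure_pmf.prob q {I. y \<in> I} = (\<Sum>x\<in>L v. measure_pmf.prob (p x) {I. y \<in> I}) / card (L v)"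
      unfolding q_def using fin ne by (rule measure_bind_pmf_of_set)
    show ?thesis
    proof (cases "u = v")
      case False
      then show ?thesis
        using q_prob p_prob u y fin ne by simp
    next
      case True
      have "(\<Sum>x\<in>L v. measure_pmf.prob (p x) {I. y \<in> I}) = 1"
      proof (rule sum_eq_one_off_point[OF fin _ two])
        show "y \<in> L v"
          using True y by simp
        show "measure_pmf.prob (p x) {I. y \<in> I} = 1 / real (card (L v) - 1)" if "x \<in> L v - {y}" for x
          using p_prob[of x v y] True y that fin v by (auto simp: card_Diff_singleton)
        have "y \<notin> I" if "I \<in> set_pmf (p y)" for I
          using p_trans[of y I] that True y unfolding indep_transversal_def by auto
        then show "measure_pmf.prob (p y) {I. y \<in> I} = 0"
          by (auto simp: measure_pmf_zero_iff)
      qed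
      then show ?thesis
        using q_prob True by simp
    qed
  qed
  ultimately show ?thesis
    unfolding has_fractional_packing_def by blast
qed

lemma corr_cover_comp_automorphism:
  assumes cov: "corr_cover VG EG L VH EH" and bij: "bij_betw \<rho> VG VG"
    and edge: "\<And>u v. u \<in> VG \<Longrightarrow> v \<in> VG \<Longrightarrow> EG (\<rho> u) (\<rho> v) = EG u v"
  shows "corr_cover VG EG (L \<circ> \<rho>) VH EH"
proof -
  have img: "\<rho> ` VG = VG" and inj: "\<And>u v. u \<in> VG \<Longrightarrow> v \<in> VG \<Longrightarrow> \<rho> u = \<rho> v \<Longrightarrow> u = v"
    using bij by (auto simp: bij_betw_def dest: inj_onD)
  then have in_VG: "\<rho> u \<in> VG" if "u \<in> VG" for u
    using that by blast
  show ?thesis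
    unfolding corr_cover_def comp_apply
  proof (intro conjI)
    show "simple_graph VH EH"
      using corr_cover_simple_graph[OF cov] .
    have "(\<Union>v\<in>VG. L (\<rho> v)) = (\<Union>w\<in>\<rho> ` VG. L w)"
      by auto
    then show "(\<Union>v\<in>VG. L (\<rho> v)) = VH"
      using img corr_cover_Union[OF cov] by simp
    show "\<forall>u\<in>VG. \<forall>v\<in>VG. u \<noteq> v \<longrightarrow> L (\<rho> u) \<inter> L (\<rho> v) = {}"
      using corr_cover_disjoint[OF cov in_VG in_VG] inj by blast
    show "\<forall>v\<in>VG. \<forall>x\<in>L (\<rho> v). \<forall>y\<in>L (\<rho> v). x \<noteq> y \<longrightarrow> EH x y"
      using corr_cover_clique[OF cov in_VG] by blast
    show "\<forall>u\<in>VG. \<forall>v\<in>VG. u \<noteq> v \<longrightarrow> \<not> EG u v \<longrightarrow> (\<forall>x\<in>L (\<rho> u). \<forall>y\<in>L (\<rho> v). \<not> EH x y)"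
      using corr_cover_non_edge[OF cov in_VG in_VG] inj edge by metis
    show "\<forall>u\<in>VG. \<forall>v\<in>VG. EG u v \<longrightarrow>
        (\<forall>x\<in>L (\<rho> u). \<forall>y\<in>L (\<rho> v). \<forall>y'\<in>L (\<rho> v). EH x y \<and> EH x y' \<longrightarrow> y = y')"
      using corr_cover_matching[OF cov in_VG in_VG] edge by metis
  qed
qed

lemma has_fractional_packing_comp_automorphism:
  assumes pk: "has_fractional_packing VG (L \<circ> \<rho>) VH EH" and bij: "bij_betw \<rho> VG VG"
  shows "has_fractional_packing VG L VH EH"
proof -
  obtain p where p: "\<forall>I\<in>set_pmf p. indep_transversal VG (L \<circ> \<rho>) VH EH I"
    "\<forall>v\<in>VG. \<forall>x\<in>(L \<circ> \<rho>) v. measure_pmf.prob p {I. x \<in> I} = 1 / real (card ((L \<circ> \<rho>) v))"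
    using pk unfolding has_fractional_packing_def by blast
  have all_VG: "\<forall>w\<in>VG. P w" if "\<forall>v\<in>VG. P (\<rho> v)" for P
    using that bij unfolding bij_betw_def by (metis imageE)
  have "indep_transversal VG L VH EH I" if "I \<in> set_pmf p" for I
    using p(1) that all_VG[of "\<lambda>w. card (I \<inter> L w) = 1"] unfolding indep_transversal_def by auto
  moreover have "\<forall>w\<in>VG. \<forall>x\<in>L w. measure_pmf.prob p {I. x \<in> I} = 1 / real (card (L w))"
    using p(2) all_VG[of "\<lambda>w. \<forall>x\<in>L w. measure_pmf.prob p {I. x \<in> I} = 1 / real (card (L w))"] by simp
  ultimately show ?thesis
    unfolding has_fractional_packing_def by blast
qed

lemma card_bij_betw_preimage:
  assumes "bij_betw \<rho> A A"
  shows "card {v\<in>A. P (\<rho> v)} = card {v\<in>A. P v}"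
proof -
  have "bij_betw \<rho> {v\<in>A. P (\<rho> v)} {v\<in>A. P v}"
    using assms unfolding bij_betw_def inj_on_def by auto
  then show ?thesis
    by (rule bij_betw_same_card)
qed

lemma cycle_edge_Suc_mod:
  assumes "i < n" "n \<ge> 3"
  shows "cycle_edge n i (Suc i mod n)" "cycle_edge n (Suc i mod n) i"
  using assms unfolding cycle_edge_def by auto

lemma corr_cover_edge_injection:
  assumes cov: "corr_cover VG EG L VH EH" and uv: "u \<in> VG" "v \<in> VG" "EG u v" "EG v u"
    and "finite (L u)" "finite (L v)" "card (L u) \<le> card (L v)"
  shows "\<exists>h. edge_injection EH (L u) (L v) h"
  using matching_extends_to_injection[OF assms(6-8)]
    corr_cover_matching[OF cov uv(1-3)] corr_cover_matching'[OF cov uv(1,2,4)] by blast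

lemma edge_avoiding_bij:
  assumes "edge_injection E A B \<mu>" "finite A" "card A = 2" "card B = 2"
  shows "\<exists>t. bij_betw t A B \<and> (\<forall>a\<in>A. \<not> E a (t a))"
proof -
  obtain d0 d1 where B: "B = {d0, d1}" "d0 \<noteq> d1"
    using assms(4) by (auto simp: card_2_iff)
  define t where "t a = (if \<mu> a = d0 then d1 else d0)" for a
  have \<mu>: "inj_on \<mu> A" "\<mu> ` A \<subseteq> B" "\<And>a b. a \<in> A \<Longrightarrow> b \<in> B \<Longrightarrow> E a b \<Longrightarrow> \<mu> a = b"
    using assms(1) unfolding edge_injection_def by auto
  have "inj_on t A"
  proof (rule inj_onI)
    fix a a' assume "a \<in> A" "a' \<in> A" "t a = t a'"
    then have "\<mu> a = \<mu> a'"
      using \<mu>(2) B unfolding t_def by (auto split: if_splits)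
    then show "a = a'"
      using \<mu>(1) \<open>a \<in> A\<close> \<open>a' \<in> A\<close> by (auto dest: inj_onD)
  qed
  then have "bij_betw t A B"
    using assms(2-4) B by (intro inj_on_card_eq_imp_bij_betw) (auto simp: t_def)
  moreover have "\<not> E a (t a)" if "a \<in> A" for a
    using \<mu>(2) \<mu>(3)[OF that] that B unfolding t_def by auto
  ultimately show ?thesis
    by blast
qed

lemma card_Diff_inj_image:
  assumes "finite A" "card A = 3" "inj_on k B" "card B = 2" "k ` B \<subseteq> A"
  shows "A - k ` B = {the_elem (A - k ` B)}"
proof -
  have "card (A - k ` B) = 1"
    using assms by (simp add: card_Diff_subset card_image finite_subset)
  then show ?thesis
    by (metis card_1_singletonE the_elem_eq)
qed

section \<open>A finite certificate\<close>

definition perms3 :: "nat list list" where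
  "perms3 = [[0,1,2],[0,2,1],[1,0,2],[1,2,0],[2,0,1],[2,1,0]]"

lemma perms3_complete:
  assumes "\<forall>z<3. \<pi> z < (3::nat)" and "inj_on \<pi> {0..<3}"
  shows "\<exists>p<6. \<forall>z<3. perms3 ! p ! z = \<pi> z"
proof -
  have all3: "(\<forall>z<3. P z) \<longleftrightarrow> P 0 \<and> P 1 \<and> P (2::nat)" for P
    by (auto simp: less_Suc_eq numeral_eq_Suc)
  have ex6: "(\<exists>p<6. P p) \<longleftrightarrow> P 0 \<or> P 1 \<or> P 2 \<or> P 3 \<or> P 4 \<or> P (5::nat)" for P
    by (auto simp: less_Suc_eq numeral_eq_Suc)
  have "\<pi> 0 \<noteq> \<pi> 1" "\<pi> 0 \<noteq> \<pi> 2" "\<pi> 1 \<noteq> \<pi> 2"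
    using inj_onD[OF assms(2), of 0 1] inj_onD[OF assms(2), of 0 2] inj_onD[OF assms(2), of 1 2]
    by auto
  moreover have "\<pi> 0 \<in> {0, 1, 2}" "\<pi> 1 \<in> {0, 1, 2}" "\<pi> 2 \<in> {0, 1, 2}"
    using assms(1) by (auto simp: less_Suc_eq numeral_eq_Suc)
  ultimately show ?thesis
    unfolding perms3_def ex6 all3 by (simp only: insert_iff empty_iff) (elim disjE; simp)
qed

definition skip :: "nat \<Rightarrow> nat \<Rightarrow> nat" where
  "skip s b = (if b < s then b else Suc b)"

definition unskip :: "nat \<Rightarrow> nat \<Rightarrow> nat" where
  "unskip s z = (if z < s then z else z - 1)"

lemma skip_less: "s < 3 \<Longrightarrow> b < 2 \<Longrightarrow> skip s b < 3"
  unfolding skip_def by auto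

lemma skip_neq: "skip s b \<noteq> s"
  unfolding skip_def by auto

lemma skip_inject: "skip s b = skip s b' \<Longrightarrow> b = b'"
  unfolding skip_def by (auto split: if_splits)

lemma skip_unskip: "z \<noteq> s \<Longrightarrow> skip s (unskip s z) = z"
  unfolding skip_def unskip_def by auto

lemma unskip_less: "z < 3 \<Longrightarrow> s < 3 \<Longrightarrow> z \<noteq> s \<Longrightarrow> unskip s z < 2"
  unfolding unskip_def by auto

text \<open>A segment of the cycle runs between two consecutive vertices with lists of size 3, whose
  colours are labelled by \<open>{0,1,2}\<close>. Code \<open>0\<close> means that the two ends are adjacent and the
  labels \<open>x\<close>, \<open>y\<close> at the ends conflict iff \<open>y = P x\<close>. Code \<open>Suc s\<close> means that there are inner
  vertices, whose colours are determined by a bit \<open>b\<close>, and that the choice \<open>b\<close> conflicts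
  exactly with the label \<open>skip s b\<close> on the left and \<open>P (skip s (1 - b))\<close> on the right.\<close>

definition segment_ok :: "nat \<Rightarrow> (nat \<Rightarrow> nat) \<Rightarrow> nat \<Rightarrow> nat \<Rightarrow> nat \<Rightarrow> bool" where
  "segment_ok c P x y b \<longleftrightarrow>
     (if c = 0 then y \<noteq> P x else b < 2 \<and> skip (c - 1) b \<noteq> x \<and> P (skip (c - 1) (1 - b)) \<noteq> y)"

text \<open>A layer \<open>(x0, x1, x2, b0, b1, b2)\<close> chooses a label at each of the three rich vertices and
  a bit for each of the three segments between them; the last segment returns to the first
  rich vertex through the permutation \<^term>\<open>perms3 ! p\<close> of labels.\<close>

type_synonym layer = "nat \<times> nat \<times> nat \<times> nat \<times> nat \<times> nat"

definition layer_ok :: "nat \<Rightarrow> nat \<Rightarrow> nat \<Rightarrow> nat \<Rightarrow> layer \<Rightarrow> bool" where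
  "layer_ok c0 c1 p c2 l \<longleftrightarrow> (case l of (x0, x1, x2, b0, b1, b2) \<Rightarrow>
     x0 < 3 \<and> x1 < 3 \<and> x2 < 3 \<and> b0 < 2 \<and> b1 < 2 \<and> b2 < 2 \<and>
     segment_ok c0 id x0 x1 b0 \<and> segment_ok c1 id x1 x2 b1 \<and>
     segment_ok c2 (\<lambda>z. perms3 ! p ! z) x2 x0 b2)"

definition balanced :: "nat \<Rightarrow> nat \<Rightarrow> nat \<Rightarrow> layer list \<Rightarrow> bool" where
  "balanced c0 c1 c2 W \<longleftrightarrow> length W = 6 \<and>
     (\<forall>i\<in>{0,1,2}. length (filter (\<lambda>(x0,x1,x2,b0,b1,b2). x0 = i) W) = 2 \<and>
                 length (filter (\<lambda>(x0,x1,x2,b0,b1,b2). x1 = i) W) = 2 \<and>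
                 length (filter (\<lambda>(x0,x1,x2,b0,b1,b2). x2 = i) W) = 2) \<and>
     (c0 \<noteq> 0 \<longrightarrow> length (filter (\<lambda>(x0,x1,x2,b0,b1,b2). b0 = 0) W) = 3) \<and>
     (c1 \<noteq> 0 \<longrightarrow> length (filter (\<lambda>(x0,x1,x2,b0,b1,b2). b1 = 0) W) = 3) \<and>
     (c2 \<noteq> 0 \<longrightarrow> length (filter (\<lambda>(x0,x1,x2,b0,b1,b2). b2 = 0) W) = 3)"

definition configurations :: "(nat \<times> nat \<times> nat \<times> nat) list" where
  "configurations = concat (map (\<lambda>c0. concat (map (\<lambda>c1. concat (map (\<lambda>p.
     map (\<lambda>c2. (c0, c1, p, c2)) [0..<4]) [0..<6])) [0..<4])) [0..<4])"

text \<open>One balanced list of layers for each of the \<open>4 * 4 * 6 * 4\<close> configurations, in the order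
  of \<^const>\<open>configurations\<close>; found by a computer search.\<close>

definition certificates :: "layer list list" where
  "certificates = [
[(0,1,2,0,0,0),(0,1,2,0,0,0),(1,2,0,0,0,0),(1,2,0,0,0,0),(2,0,1,0,0,0),(2,0,1,0,0,0)],
[(0,1,2,0,0,0),(0,2,1,0,0,1),(1,0,2,0,0,0),(1,2,0,0,0,0),(2,0,1,0,0,1),(2,1,0,0,0,1)],
[(0,1,2,0,0,0),(0,2,1,0,0,0),(1,0,2,0,0,0),(1,2,0,0,0,1),(2,0,1,0,0,1),(2,1,0,0,0,1)],
[(0,1,2,0,0,0),(0,2,1,0,0,0),(1,0,2,0,0,1),(1,2,0,0,0,1),(2,0,1,0,0,0),(2,1,0,0,0,1)],
[(0,1,2,0,0,0),(0,2,1,0,0,0),(1,0,1,0,0,0),(1,2,0,0,0,0),(2,0,2,0,0,0),(2,1,0,0,0,0)],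
[(0,1,0,0,0,0),(0,1,0,0,0,1),(1,2,1,0,0,1),(1,2,1,0,0,1),(2,0,2,0,0,0),(2,0,2,0,0,0)],
[(0,1,2,0,0,0),(0,1,2,0,0,0),(1,2,0,0,0,1),(1,2,0,0,0,1),(2,0,1,0,0,0),(2,0,1,0,0,1)],
[(0,1,2,0,0,0),(0,2,1,0,0,0),(1,0,1,0,0,0),(1,2,0,0,0,1),(2,0,2,0,0,1),(2,1,0,0,0,1)],
[(0,1,2,0,0,0),(0,2,0,0,0,0),(1,0,2,0,0,0),(1,2,1,0,0,0),(2,0,1,0,0,0),(2,1,0,0,0,0)],
[(0,1,2,0,0,0),(0,1,2,0,0,0),(1,2,0,0,0,0),(1,2,0,0,0,1),(2,0,1,0,0,1),(2,0,1,0,0,1)],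
[(0,1,2,0,0,0),(0,2,0,0,0,1),(1,0,2,0,0,0),(1,2,1,0,0,0),(2,0,1,0,0,1),(2,1,0,0,0,1)],
[(0,1,0,0,0,1),(0,1,0,0,0,1),(1,2,1,0,0,0),(1,2,1,0,0,0),(2,0,2,0,0,0),(2,0,2,0,0,1)],
[(0,1,0,0,0,0),(0,1,0,0,0,0),(1,2,1,0,0,0),(1,2,1,0,0,0),(2,0,2,0,0,0),(2,0,2,0,0,0)],
[(0,1,0,0,0,1),(0,2,1,0,0,1),(1,0,1,0,0,1),(1,2,0,0,0,0),(2,0,2,0,0,0),(2,1,2,0,0,0)],
[(0,1,0,0,0,1),(0,2,0,0,0,1),(1,0,2,0,0,0),(1,2,1,0,0,0),(2,0,1,0,0,1),(2,1,2,0,0,0)],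
[(0,1,0,0,0,1),(0,2,1,0,0,0),(1,0,2,0,0,0),(1,2,1,0,0,0),(2,0,2,0,0,1),(2,1,0,0,0,1)],
[(0,1,0,0,0,0),(0,1,0,0,0,0),(1,2,1,0,0,0),(1,2,1,0,0,0),(2,0,2,0,0,0),(2,0,2,0,0,0)],
[(0,1,0,0,0,0),(0,1,2,0,0,0),(1,2,0,0,0,1),(1,2,1,0,0,1),(2,0,1,0,0,1),(2,0,2,0,0,0)],
[(0,1,0,0,0,1),(0,1,2,0,0,0),(1,2,0,0,0,1),(1,2,1,0,0,1),(2,0,1,0,0,0),(2,0,2,0,0,0)],
[(0,1,0,0,0,1),(0,1,2,0,0,1),(1,2,0,0,0,1),(1,2,1,0,0,0),(2,0,1,0,0,0),(2,0,2,0,0,0)],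
[(0,1,0,0,0,0),(0,2,1,0,0,0),(1,0,2,0,0,0),(1,2,0,0,0,0),(2,0,1,0,0,0),(2,1,2,0,0,0)],
[(0,1,0,0,0,1),(0,2,1,0,0,1),(1,0,2,0,0,0),(1,2,0,0,0,0),(2,0,1,0,0,1),(2,1,2,0,0,0)],
[(0,1,0,0,0,1),(0,1,0,0,0,1),(1,2,1,0,0,0),(1,2,1,0,0,1),(2,0,2,0,0,0),(2,0,2,0,0,0)],
[(0,1,0,0,0,1),(0,2,1,0,0,0),(1,0,2,0,0,1),(1,2,0,0,0,1),(2,0,1,0,0,0),(2,1,2,0,0,0)],
[(0,1,2,0,1,0),(0,2,1,0,0,0),(1,0,2,0,1,0),(1,2,0,0,0,0),(2,0,1,0,0,0),(2,1,0,0,1,0)],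
[(0,1,2,0,1,0),(0,2,1,0,0,1),(1,0,2,0,1,0),(1,2,0,0,0,0),(2,0,1,0,0,1),(2,1,0,0,1,1)],
[(0,1,2,0,1,0),(0,1,2,0,1,0),(1,2,0,0,0,1),(1,2,1,0,0,0),(2,0,0,0,1,1),(2,0,1,0,0,1)],
[(0,1,2,0,1,0),(0,2,1,0,0,0),(1,0,0,0,1,1),(1,2,0,0,0,1),(2,0,1,0,0,0),(2,1,2,0,1,1)],
[(0,1,2,0,1,0),(0,1,2,0,1,0),(1,2,1,0,0,0),(1,2,1,0,0,0),(2,0,0,0,0,0),(2,0,0,0,1,0)],
[(0,1,0,0,1,0),(0,2,0,0,0,1),(1,0,1,0,0,1),(1,2,1,0,0,1),(2,0,2,0,1,0),(2,1,2,0,1,0)],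
[(0,1,2,0,1,0),(0,1,2,0,1,0),(1,2,0,0,0,1),(1,2,1,0,0,1),(2,0,0,0,1,1),(2,0,1,0,0,0)],
[(0,1,2,0,1,0),(0,2,1,0,0,0),(1,0,0,0,0,1),(1,2,1,0,0,0),(2,0,0,0,1,1),(2,1,2,0,1,1)],
[(0,1,2,0,1,0),(0,1,2,0,1,0),(1,2,1,0,0,0),(1,2,1,0,0,0),(2,0,0,0,0,0),(2,0,0,0,1,0)],
[(0,1,2,0,1,0),(0,1,2,0,1,0),(1,2,0,0,0,0),(1,2,1,0,0,1),(2,0,0,0,1,1),(2,0,1,0,0,1)],
[(0,1,2,0,1,0),(0,2,0,0,0,1),(1,0,2,0,1,0),(1,2,1,0,0,0),(2,0,1,0,0,1),(2,1,0,0,1,1)],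
[(0,1,0,0,1,1),(0,1,2,0,1,1),(1,2,1,0,0,0),(1,2,1,0,0,0),(2,0,0,0,0,1),(2,0,2,0,1,0)],
[(0,1,0,0,1,0),(0,2,0,0,0,0),(1,0,1,0,0,0),(1,2,1,0,0,0),(2,0,2,0,1,0),(2,1,2,0,1,0)],
[(0,1,0,0,1,1),(0,2,1,0,0,1),(1,0,0,0,0,0),(1,2,1,0,0,1),(2,0,2,0,1,0),(2,1,2,0,1,0)],
[(0,1,0,0,1,1),(0,2,0,0,0,1),(1,0,2,0,1,0),(1,2,1,0,0,0),(2,0,1,0,0,1),(2,1,2,0,1,0)],
[(0,1,0,0,1,1),(0,1,2,0,1,0),(1,2,1,0,0,0),(1,2,1,0,0,0),(2,0,0,0,0,1),(2,0,2,0,1,1)],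
[(0,1,0,0,1,0),(0,1,2,0,1,0),(1,2,0,0,0,0),(1,2,1,0,0,0),(2,0,1,0,0,0),(2,0,2,0,1,0)],
[(0,1,0,0,1,0),(0,1,2,0,1,0),(1,2,0,0,0,1),(1,2,1,0,0,1),(2,0,1,0,0,1),(2,0,2,0,1,0)],
[(0,1,0,0,1,1),(0,1,2,0,1,0),(1,2,0,0,0,1),(1,2,1,0,0,1),(2,0,1,0,0,0),(2,0,2,0,1,0)],
[(0,1,0,0,1,1),(0,1,2,0,1,1),(1,2,0,0,0,1),(1,2,1,0,0,0),(2,0,1,0,0,0),(2,0,2,0,1,0)],
[(0,1,0,0,1,0),(0,2,1,0,0,0),(1,0,2,0,1,0),(1,2,0,0,0,0),(2,0,1,0,0,0),(2,1,2,0,1,0)],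
[(0,1,0,0,1,1),(0,2,1,0,0,1),(1,0,2,0,1,0),(1,2,0,0,0,0),(2,0,1,0,0,1),(2,1,2,0,1,0)],
[(0,1,0,0,1,1),(0,2,0,0,0,1),(1,0,1,0,0,0),(1,2,1,0,0,1),(2,0,2,0,1,0),(2,1,2,0,1,0)],
[(0,1,0,0,1,1),(0,2,1,0,0,0),(1,0,2,0,1,1),(1,2,0,0,0,1),(2,0,1,0,0,0),(2,1,2,0,1,0)],
[(0,1,2,0,1,0),(0,2,1,0,0,0),(1,0,2,0,1,0),(1,2,0,0,0,0),(2,0,1,0,1,0),(2,1,0,0,0,0)],
[(0,1,2,0,1,0),(0,2,0,0,0,1),(1,0,2,0,1,0),(1,2,0,0,0,0),(2,0,1,0,1,1),(2,1,1,0,0,1)],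
[(0,1,2,0,1,0),(0,2,1,0,0,0),(1,0,2,0,1,0),(1,2,0,0,0,1),(2,0,1,0,1,1),(2,1,0,0,0,1)],
[(0,1,1,0,0,0),(0,1,1,0,1,0),(1,2,0,0,0,1),(1,2,0,0,0,1),(2,0,2,0,1,0),(2,0,2,0,1,1)],
[(0,1,1,0,0,0),(0,1,1,0,1,0),(1,2,0,0,0,0),(1,2,0,0,0,0),(2,0,2,0,1,0),(2,0,2,0,1,0)],
[(0,1,0,0,0,0),(0,1,1,0,1,1),(1,2,0,0,0,1),(1,2,1,0,0,1),(2,0,2,0,1,0),(2,0,2,0,1,0)],
[(0,1,1,0,0,0),(0,1,2,0,1,0),(1,2,0,0,0,1),(1,2,0,0,0,1),(2,0,1,0,1,1),(2,0,2,0,1,0)],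
[(0,1,1,0,1,0),(0,2,1,0,0,0),(1,0,2,0,1,0),(1,2,0,0,0,1),(2,0,2,0,1,1),(2,1,0,0,0,1)],
[(0,1,2,0,1,0),(0,2,0,0,0,0),(1,0,2,0,1,0),(1,2,1,0,0,0),(2,0,1,0,1,0),(2,1,0,0,0,0)],
[(0,1,2,0,1,0),(0,2,0,0,0,0),(1,0,2,0,1,0),(1,2,0,0,0,1),(2,0,1,0,1,1),(2,1,1,0,0,1)],
[(0,1,2,0,1,0),(0,2,0,0,0,1),(1,0,2,0,1,0),(1,2,1,0,0,0),(2,0,1,0,1,1),(2,1,0,0,0,1)],
[(0,1,0,0,0,1),(0,2,0,0,0,1),(1,0,1,0,1,0),(1,2,1,0,0,0),(2,0,2,0,1,0),(2,1,2,0,1,1)],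
[(0,1,0,0,0,0),(0,2,0,0,0,0),(1,0,1,0,1,0),(1,2,1,0,0,0),(2,0,2,0,1,0),(2,1,2,0,1,0)],
[(0,1,0,0,0,1),(0,1,1,0,1,1),(1,2,0,0,0,0),(1,2,1,0,0,1),(2,0,2,0,1,0),(2,0,2,0,1,0)],
[(0,1,0,0,0,1),(0,2,0,0,0,1),(1,0,2,0,1,0),(1,2,1,0,0,0),(2,0,1,0,1,1),(2,1,2,0,1,0)],
[(0,1,1,0,1,0),(0,2,0,0,0,1),(1,0,2,0,1,0),(1,2,1,0,0,0),(2,0,2,0,1,1),(2,1,0,0,0,1)],
[(0,1,0,0,0,0),(0,1,2,0,1,0),(1,2,0,0,0,0),(1,2,1,0,0,0),(2,0,1,0,1,0),(2,0,2,0,1,0)],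
[(0,1,0,0,0,0),(0,1,2,0,1,0),(1,2,0,0,0,1),(1,2,1,0,0,1),(2,0,1,0,1,1),(2,0,2,0,1,0)],
[(0,1,0,0,0,1),(0,1,1,0,1,0),(1,2,0,0,0,1),(1,2,1,0,0,1),(2,0,2,0,1,0),(2,0,2,0,1,0)],
[(0,1,0,0,0,1),(0,1,2,0,1,1),(1,2,0,0,0,1),(1,2,1,0,0,0),(2,0,1,0,1,0),(2,0,2,0,1,0)],
[(0,1,0,0,0,0),(0,2,1,0,0,0),(1,0,2,0,1,0),(1,2,0,0,0,0),(2,0,1,0,1,0),(2,1,2,0,1,0)],
[(0,1,0,0,0,1),(0,2,1,0,0,1),(1,0,2,0,1,0),(1,2,0,0,0,0),(2,0,1,0,1,1),(2,1,2,0,1,0)],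
[(0,1,0,0,0,1),(0,1,1,0,1,1),(1,2,0,0,0,1),(1,2,1,0,0,0),(2,0,2,0,1,0),(2,0,2,0,1,0)],
[(0,1,0,0,0,1),(0,2,1,0,0,0),(1,0,2,0,1,1),(1,2,0,0,0,1),(2,0,1,0,1,0),(2,1,2,0,1,0)],
[(0,1,2,0,0,0),(0,2,1,0,1,0),(1,0,2,0,1,0),(1,2,0,0,0,0),(2,0,1,0,1,0),(2,1,0,0,0,0)],
[(0,1,0,0,0,0),(0,1,0,0,0,1),(1,2,2,0,0,0),(1,2,2,0,1,0),(2,0,1,0,1,1),(2,0,1,0,1,1)],
[(0,1,2,0,0,0),(0,2,1,0,1,0),(1,0,2,0,1,0),(1,2,0,0,0,1),(2,0,1,0,1,1),(2,1,0,0,0,1)],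
[(0,1,2,0,0,0),(0,2,1,0,1,0),(1,0,2,0,1,1),(1,2,0,0,0,1),(2,0,1,0,1,0),(2,1,0,0,0,1)],
[(0,1,2,0,0,0),(0,2,1,0,1,0),(1,0,1,0,1,0),(1,2,0,0,0,0),(2,0,2,0,1,0),(2,1,0,0,0,0)],
[(0,1,0,0,0,0),(0,2,0,0,0,1),(1,0,1,0,1,1),(1,2,1,0,1,1),(2,0,2,0,1,0),(2,1,2,0,0,0)],
[(0,1,2,0,0,0),(0,2,1,0,1,0),(1,0,1,0,1,1),(1,2,0,0,0,1),(2,0,2,0,1,0),(2,1,0,0,0,1)],
[(0,1,2,0,0,0),(0,2,1,0,1,0),(1,0,1,0,1,0),(1,2,0,0,0,1),(2,0,2,0,1,1),(2,1,0,0,0,1)],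
[(0,1,0,0,0,0),(0,1,0,0,0,0),(1,2,2,0,0,0),(1,2,2,0,1,0),(2,0,1,0,1,0),(2,0,1,0,1,0)],
[(0,1,0,0,0,0),(0,1,2,0,0,0),(1,2,0,0,0,1),(1,2,2,0,1,0),(2,0,1,0,1,1),(2,0,1,0,1,1)],
[(0,1,0,0,0,1),(0,2,1,0,1,0),(1,0,2,0,1,0),(1,2,2,0,0,0),(2,0,1,0,1,1),(2,1,0,0,0,1)],
[(0,1,0,0,0,1),(0,1,0,0,0,1),(1,2,1,0,1,0),(1,2,2,0,0,0),(2,0,1,0,1,0),(2,0,2,0,1,1)],
[(0,1,0,0,0,0),(0,2,0,0,0,0),(1,0,1,0,1,0),(1,2,1,0,1,0),(2,0,2,0,1,0),(2,1,2,0,0,0)],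
[(0,1,0,0,0,1),(0,2,1,0,1,1),(1,0,1,0,1,1),(1,2,0,0,0,0),(2,0,2,0,1,0),(2,1,2,0,0,0)],
[(0,1,0,0,0,1),(0,1,0,0,0,1),(1,2,1,0,1,0),(1,2,2,0,0,0),(2,0,1,0,1,1),(2,0,2,0,1,0)],
[(0,1,0,0,0,1),(0,2,1,0,1,0),(1,0,1,0,1,0),(1,2,2,0,0,0),(2,0,2,0,1,1),(2,1,0,0,0,1)],
[(0,1,0,0,0,0),(0,1,2,0,0,0),(1,2,0,0,0,0),(1,2,1,0,1,0),(2,0,1,0,1,0),(2,0,2,0,1,0)],
[(0,1,0,0,0,0),(0,1,2,0,0,0),(1,2,0,0,0,1),(1,2,1,0,1,1),(2,0,1,0,1,1),(2,0,2,0,1,0)],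
[(0,1,0,0,0,1),(0,1,2,0,0,0),(1,2,0,0,0,1),(1,2,1,0,1,1),(2,0,1,0,1,0),(2,0,2,0,1,0)],
[(0,1,0,0,0,1),(0,1,0,0,0,1),(1,2,1,0,1,0),(1,2,2,0,0,1),(2,0,1,0,1,0),(2,0,2,0,1,0)],
[(0,1,0,0,0,0),(0,1,0,0,0,0),(1,2,2,0,0,0),(1,2,2,0,1,0),(2,0,1,0,1,0),(2,0,1,0,1,0)],
[(0,1,0,0,0,1),(0,2,1,0,1,1),(1,0,2,0,1,0),(1,2,0,0,0,0),(2,0,1,0,1,1),(2,1,2,0,0,0)],
[(0,1,0,0,0,1),(0,1,0,0,0,1),(1,2,1,0,1,1),(1,2,2,0,0,0),(2,0,1,0,1,0),(2,0,2,0,1,0)],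
[(0,1,0,0,0,1),(0,1,2,0,0,0),(1,2,0,0,0,1),(1,2,2,0,1,1),(2,0,1,0,1,0),(2,0,1,0,1,0)],
[(0,1,2,0,0,0),(0,2,1,1,0,0),(1,0,2,1,0,0),(1,2,0,1,0,0),(2,0,1,0,0,0),(2,1,0,0,0,0)],
[(0,1,2,0,0,0),(0,2,1,1,0,1),(1,0,2,1,0,0),(1,2,0,1,0,0),(2,0,1,0,0,1),(2,1,0,0,0,1)],
[(0,0,2,0,0,0),(0,0,2,1,0,0),(1,2,1,1,0,0),(1,2,1,1,0,1),(2,1,0,0,0,1),(2,1,0,0,0,1)],
[(0,0,1,0,0,0),(0,0,1,1,0,0),(1,2,0,1,0,1),(1,2,0,1,0,1),(2,1,2,0,0,0),(2,1,2,0,0,1)],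
[(0,0,1,0,0,0),(0,0,1,1,0,0),(1,2,0,1,0,0),(1,2,0,1,0,0),(2,1,2,0,0,0),(2,1,2,0,0,0)],
[(0,0,1,0,0,1),(0,0,2,1,0,0),(1,2,0,1,0,1),(1,2,1,1,0,1),(2,1,0,0,0,0),(2,1,2,0,0,0)],
[(0,0,1,0,0,0),(0,0,2,1,0,0),(1,2,0,1,0,1),(1,2,1,1,0,1),(2,1,0,0,0,1),(2,1,2,0,0,0)],
[(0,0,1,0,0,0),(0,0,2,1,0,0),(1,2,0,1,0,1),(1,2,1,1,0,0),(2,1,0,0,0,1),(2,1,2,0,0,1)],
[(0,0,2,0,0,0),(0,0,2,1,0,0),(1,2,1,1,0,0),(1,2,1,1,0,0),(2,1,0,0,0,0),(2,1,0,0,0,0)],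
[(0,0,2,1,0,0),(0,1,2,0,0,0),(1,2,0,1,0,0),(1,2,1,1,0,1),(2,0,1,0,0,1),(2,1,0,0,0,1)],
[(0,0,2,0,0,0),(0,2,1,1,0,1),(1,0,2,1,0,0),(1,2,1,1,0,0),(2,1,0,0,0,1),(2,1,0,0,0,1)],
[(0,0,2,0,0,1),(0,2,0,1,0,1),(1,0,1,1,0,0),(1,2,1,1,0,0),(2,1,0,0,0,1),(2,1,2,0,0,0)],
[(0,0,1,0,0,0),(0,2,0,1,0,0),(1,0,2,1,0,0),(1,2,1,1,0,0),(2,1,0,0,0,0),(2,1,2,0,0,0)],
[(0,0,1,0,0,1),(0,0,1,1,0,1),(1,2,0,1,0,0),(1,2,0,1,0,1),(2,1,2,0,0,0),(2,1,2,0,0,0)],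
[(0,0,1,0,0,1),(0,2,0,1,0,1),(1,0,2,1,0,0),(1,2,1,1,0,0),(2,1,0,0,0,1),(2,1,2,0,0,0)],
[(0,0,1,0,0,0),(0,2,0,1,0,1),(1,0,2,1,0,0),(1,2,1,1,0,0),(2,1,0,0,0,1),(2,1,2,0,0,1)],
[(0,0,2,1,0,0),(0,1,0,0,0,0),(1,2,0,1,0,0),(1,2,1,1,0,0),(2,0,1,0,0,0),(2,1,2,0,0,0)],
[(0,0,2,0,0,0),(0,0,2,1,0,0),(1,2,1,1,0,1),(1,2,1,1,0,1),(2,1,0,0,0,0),(2,1,0,0,0,1)],
[(0,0,1,0,0,0),(0,0,1,1,0,1),(1,2,0,1,0,1),(1,2,0,1,0,1),(2,1,2,0,0,0),(2,1,2,0,0,0)],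
[(0,0,2,1,0,1),(0,1,0,0,0,1),(1,2,0,1,0,1),(1,2,1,1,0,0),(2,0,1,0,0,0),(2,1,2,0,0,0)],
[(0,0,1,0,0,0),(0,0,1,1,0,0),(1,2,0,1,0,0),(1,2,0,1,0,0),(2,1,2,0,0,0),(2,1,2,0,0,0)],
[(0,0,1,0,0,1),(0,2,1,1,0,1),(1,0,2,1,0,0),(1,2,0,1,0,0),(2,1,0,0,0,1),(2,1,2,0,0,0)],
[(0,0,1,0,0,1),(0,2,0,1,0,1),(1,0,1,1,0,0),(1,2,0,1,0,1),(2,1,2,0,0,0),(2,1,2,0,0,0)],
[(0,0,1,1,0,0),(0,1,2,0,0,1),(1,2,0,1,0,1),(1,2,0,1,0,1),(2,0,1,0,0,0),(2,1,2,0,0,0)],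
[(0,1,2,0,1,0),(0,2,1,1,0,0),(1,0,2,1,1,0),(1,2,0,1,0,0),(2,0,1,0,0,0),(2,1,0,0,1,0)],
[(0,1,2,0,1,0),(0,2,1,1,0,1),(1,0,2,1,1,0),(1,2,0,1,0,0),(2,0,1,0,0,1),(2,1,0,0,1,1)],
[(0,0,2,1,1,0),(0,1,2,0,1,0),(1,2,0,1,0,1),(1,2,1,1,0,0),(2,0,1,0,0,1),(2,1,0,0,1,1)],
[(0,0,1,0,0,0),(0,2,1,1,0,0),(1,0,0,1,1,1),(1,2,0,1,0,1),(2,1,2,0,1,0),(2,1,2,0,1,1)],
[(0,0,1,0,0,0),(0,0,2,1,1,0),(1,2,0,1,0,0),(1,2,1,1,0,0),(2,1,0,0,1,0),(2,1,2,0,1,0)],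
[(0,0,0,0,0,0),(0,0,0,1,1,1),(1,2,1,1,0,1),(1,2,1,1,0,1),(2,1,2,0,1,0),(2,1,2,0,1,0)],
[(0,0,1,0,0,0),(0,0,2,1,1,0),(1,2,0,1,0,1),(1,2,1,1,0,1),(2,1,0,0,1,1),(2,1,2,0,1,0)],
[(0,0,1,0,0,0),(0,0,2,1,1,0),(1,2,0,1,0,1),(1,2,1,1,0,0),(2,1,0,0,1,1),(2,1,2,0,1,1)],
[(0,0,2,1,1,0),(0,1,2,0,1,0),(1,2,1,1,0,0),(1,2,1,1,0,0),(2,0,0,0,0,0),(2,1,0,0,1,0)],
[(0,0,2,1,1,0),(0,1,2,0,1,0),(1,2,0,1,0,0),(1,2,1,1,0,1),(2,0,1,0,0,1),(2,1,0,0,1,1)],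
[(0,1,2,0,1,0),(0,2,0,1,0,1),(1,0,2,1,1,0),(1,2,1,1,0,0),(2,0,1,0,0,1),(2,1,0,0,1,1)],
[(0,0,0,0,0,1),(0,0,0,1,1,1),(1,2,1,1,0,0),(1,2,1,1,0,0),(2,1,2,0,1,0),(2,1,2,0,1,1)],
[(0,0,0,0,0,0),(0,0,0,1,1,0),(1,2,1,1,0,0),(1,2,1,1,0,0),(2,1,2,0,1,0),(2,1,2,0,1,0)],
[(0,0,0,0,0,1),(0,2,1,1,0,1),(1,0,0,1,1,0),(1,2,1,1,0,1),(2,1,2,0,1,0),(2,1,2,0,1,0)],
[(0,0,0,0,0,1),(0,2,1,1,0,1),(1,0,2,1,1,0),(1,2,1,1,0,0),(2,1,0,0,1,1),(2,1,2,0,1,0)],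
[(0,0,0,0,0,1),(0,0,2,1,1,0),(1,2,1,1,0,0),(1,2,1,1,0,0),(2,1,0,0,1,1),(2,1,2,0,1,1)],
[(0,0,0,0,0,0),(0,0,0,1,1,0),(1,2,1,1,0,0),(1,2,1,1,0,0),(2,1,2,0,1,0),(2,1,2,0,1,0)],
[(0,0,0,0,0,0),(0,0,2,1,1,0),(1,2,1,1,0,1),(1,2,1,1,0,1),(2,1,0,0,1,1),(2,1,2,0,1,0)],
[(0,0,0,0,0,1),(0,2,1,1,0,0),(1,0,0,1,1,1),(1,2,1,1,0,1),(2,1,2,0,1,0),(2,1,2,0,1,0)],
[(0,0,0,1,1,1),(0,1,2,0,1,1),(1,2,0,1,0,1),(1,2,1,1,0,0),(2,0,1,0,0,0),(2,1,2,0,1,0)],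
[(0,0,1,0,0,0),(0,2,1,1,0,0),(1,0,0,1,1,0),(1,2,0,1,0,0),(2,1,2,0,1,0),(2,1,2,0,1,0)],
[(0,0,1,0,0,1),(0,2,1,1,0,1),(1,0,2,1,1,0),(1,2,0,1,0,0),(2,1,0,0,1,1),(2,1,2,0,1,0)],
[(0,0,0,0,0,1),(0,0,0,1,1,1),(1,2,1,1,0,0),(1,2,1,1,0,1),(2,1,2,0,1,0),(2,1,2,0,1,0)],
[(0,1,0,0,1,1),(0,2,1,1,0,0),(1,0,2,1,1,1),(1,2,0,1,0,1),(2,0,1,0,0,0),(2,1,2,0,1,0)],
[(0,0,2,0,1,0),(0,0,2,1,1,0),(1,2,0,1,0,0),(1,2,0,1,0,0),(2,1,1,0,0,0),(2,1,1,0,1,0)],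
[(0,0,2,0,1,0),(0,2,0,1,0,1),(1,0,2,1,1,0),(1,2,0,1,0,0),(2,1,1,0,0,1),(2,1,1,0,1,1)],
[(0,0,2,0,1,0),(0,0,2,1,1,0),(1,2,0,1,0,1),(1,2,1,1,0,0),(2,1,0,0,0,1),(2,1,1,0,1,1)],
[(0,0,1,0,1,0),(0,0,2,1,1,0),(1,2,0,1,0,1),(1,2,0,1,0,1),(2,1,1,0,0,0),(2,1,2,0,1,1)],
[(0,0,1,0,1,0),(0,0,2,1,1,0),(1,2,0,1,0,0),(1,2,1,1,0,0),(2,1,0,0,0,0),(2,1,2,0,1,0)],
[(0,0,1,0,1,1),(0,0,2,1,1,0),(1,2,0,1,0,1),(1,2,1,1,0,1),(2,1,0,0,0,0),(2,1,2,0,1,0)],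
[(0,0,1,0,1,0),(0,0,2,1,1,0),(1,2,0,1,0,1),(1,2,0,1,0,1),(2,1,1,0,0,1),(2,1,2,0,1,0)],
[(0,0,1,0,1,0),(0,0,2,1,1,0),(1,2,0,1,0,1),(1,2,1,1,0,0),(2,1,0,0,0,1),(2,1,2,0,1,1)],
[(0,0,2,0,1,0),(0,2,0,1,0,0),(1,0,2,1,1,0),(1,2,1,1,0,0),(2,1,0,0,0,0),(2,1,1,0,1,0)],
[(0,0,2,0,1,0),(0,0,2,1,1,0),(1,2,0,1,0,0),(1,2,0,1,0,1),(2,1,1,0,0,1),(2,1,1,0,1,1)],
[(0,0,2,0,1,0),(0,2,0,1,0,1),(1,0,2,1,1,0),(1,2,1,1,0,0),(2,1,0,0,0,1),(2,1,1,0,1,1)],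
[(0,0,2,0,1,1),(0,2,0,1,0,1),(1,0,1,1,1,0),(1,2,1,1,0,0),(2,1,0,0,0,1),(2,1,2,0,1,0)],
[(0,0,1,0,1,0),(0,2,0,1,0,0),(1,0,2,1,1,0),(1,2,1,1,0,0),(2,1,0,0,0,0),(2,1,2,0,1,0)],
[(0,0,1,0,1,1),(0,2,0,1,0,1),(1,0,2,1,1,0),(1,2,1,1,0,1),(2,1,0,0,0,0),(2,1,2,0,1,0)],
[(0,0,1,0,1,1),(0,2,0,1,0,1),(1,0,2,1,1,0),(1,2,1,1,0,0),(2,1,0,0,0,1),(2,1,2,0,1,0)],
[(0,0,1,0,1,0),(0,2,0,1,0,1),(1,0,2,1,1,0),(1,2,1,1,0,0),(2,1,0,0,0,1),(2,1,2,0,1,1)],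
[(0,0,2,0,1,0),(0,0,2,1,1,0),(1,2,0,1,0,0),(1,2,0,1,0,0),(2,1,1,0,0,0),(2,1,1,0,1,0)],
[(0,0,2,0,1,0),(0,0,2,1,1,0),(1,2,0,1,0,1),(1,2,1,1,0,1),(2,1,0,0,0,0),(2,1,1,0,1,1)],
[(0,0,1,0,1,1),(0,0,2,1,1,0),(1,2,0,1,0,1),(1,2,0,1,0,1),(2,1,1,0,0,0),(2,1,2,0,1,0)],
[(0,0,2,0,1,1),(0,2,0,1,0,1),(1,0,1,1,1,0),(1,2,0,1,0,1),(2,1,1,0,0,0),(2,1,2,0,1,0)],
[(0,0,1,0,1,0),(0,2,0,1,0,0),(1,0,2,1,1,0),(1,2,0,1,0,0),(2,1,1,0,0,0),(2,1,2,0,1,0)],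
[(0,0,1,0,1,1),(0,2,0,1,0,1),(1,0,2,1,1,0),(1,2,0,1,0,0),(2,1,1,0,0,1),(2,1,2,0,1,0)],
[(0,0,1,0,1,1),(0,2,0,1,0,1),(1,0,2,1,1,0),(1,2,0,1,0,1),(2,1,1,0,0,0),(2,1,2,0,1,0)],
[(0,0,1,0,1,0),(0,0,2,1,1,1),(1,2,0,1,0,1),(1,2,0,1,0,1),(2,1,1,0,0,0),(2,1,2,0,1,0)],
[(0,0,1,0,1,0),(0,0,1,1,1,0),(1,2,2,1,0,0),(1,2,2,1,1,0),(2,1,0,0,0,0),(2,1,0,0,0,0)],
[(0,0,1,1,1,1),(0,1,0,0,0,0),(1,2,2,1,0,0),(1,2,2,1,1,0),(2,0,1,0,1,1),(2,1,0,0,0,1)],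
[(0,0,1,0,1,0),(0,0,2,1,1,0),(1,2,1,1,1,1),(1,2,2,1,0,0),(2,1,0,0,0,1),(2,1,0,0,0,1)],
[(0,0,1,0,1,0),(0,0,1,1,1,0),(1,2,0,1,0,1),(1,2,2,1,1,1),(2,1,0,0,0,1),(2,1,2,0,0,0)],
[(0,0,1,0,1,0),(0,0,2,1,1,0),(1,2,0,1,0,0),(1,2,1,1,1,0),(2,1,0,0,0,0),(2,1,2,0,0,0)],
[(0,0,1,0,1,1),(0,0,2,1,1,0),(1,2,0,1,0,1),(1,2,1,1,1,1),(2,1,0,0,0,0),(2,1,2,0,0,0)],
[(0,0,1,0,1,0),(0,0,2,1,1,0),(1,2,0,1,0,1),(1,2,1,1,1,1),(2,1,0,0,0,1),(2,1,2,0,0,0)],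
[(0,0,1,0,1,0),(0,0,1,1,1,0),(1,2,0,1,0,1),(1,2,2,1,1,0),(2,1,0,0,0,1),(2,1,2,0,0,1)],
[(0,0,2,0,1,0),(0,2,2,1,0,0),(1,0,1,1,1,0),(1,2,1,1,1,0),(2,1,0,0,0,0),(2,1,0,0,0,0)],
[(0,0,2,1,1,0),(0,1,0,0,0,0),(1,2,1,1,1,1),(1,2,2,1,0,0),(2,0,1,0,1,1),(2,1,0,0,0,1)],
[(0,0,1,0,1,0),(0,0,1,1,1,1),(1,2,2,1,0,0),(1,2,2,1,1,0),(2,1,0,0,0,1),(2,1,0,0,0,1)],
[(0,0,2,0,1,1),(0,2,0,1,0,1),(1,0,1,1,1,0),(1,2,1,1,1,0),(2,1,0,0,0,1),(2,1,2,0,0,0)],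
[(0,0,1,0,1,0),(0,0,1,1,1,0),(1,2,2,1,0,0),(1,2,2,1,1,0),(2,1,0,0,0,0),(2,1,0,0,0,0)],
[(0,0,1,0,1,1),(0,0,1,1,1,1),(1,2,0,1,0,1),(1,2,2,1,1,0),(2,1,0,0,0,0),(2,1,2,0,0,0)],
[(0,0,1,0,1,1),(0,2,0,1,0,1),(1,0,1,1,1,0),(1,2,2,1,1,0),(2,1,0,0,0,1),(2,1,2,0,0,0)],
[(0,0,1,0,1,0),(0,0,2,1,1,1),(1,2,1,1,1,0),(1,2,2,1,0,0),(2,1,0,0,0,1),(2,1,0,0,0,1)],
[(0,0,2,1,1,0),(0,1,0,0,0,0),(1,2,0,1,0,0),(1,2,1,1,1,0),(2,0,1,0,1,0),(2,1,2,0,0,0)],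
[(0,0,2,0,1,0),(0,2,0,1,0,0),(1,0,1,1,1,1),(1,2,1,1,1,1),(2,1,0,0,0,1),(2,1,2,0,0,0)],
[(0,0,1,1,1,0),(0,1,0,0,0,1),(1,2,0,1,0,1),(1,2,1,1,1,1),(2,0,2,0,1,0),(2,1,2,0,0,0)],
[(0,0,2,1,1,1),(0,1,0,0,0,1),(1,2,0,1,0,1),(1,2,1,1,1,0),(2,0,1,0,1,0),(2,1,2,0,0,0)],
[(0,0,1,1,1,0),(0,1,0,0,0,0),(1,2,0,1,0,0),(1,2,2,1,1,0),(2,0,1,0,1,0),(2,1,2,0,0,0)],
[(0,0,1,0,1,1),(0,0,1,1,1,1),(1,2,0,1,0,0),(1,2,2,1,1,0),(2,1,0,0,0,1),(2,1,2,0,0,0)],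
[(0,0,1,1,1,1),(0,1,0,0,0,1),(1,2,0,1,0,1),(1,2,1,1,1,0),(2,0,2,0,1,0),(2,1,2,0,0,0)],
[(0,0,1,1,1,0),(0,1,0,0,0,1),(1,2,0,1,0,1),(1,2,2,1,1,1),(2,0,1,0,1,0),(2,1,2,0,0,0)],
[(0,1,2,1,0,0),(0,2,1,1,0,0),(1,0,2,0,0,0),(1,2,0,1,0,0),(2,0,1,0,0,0),(2,1,0,0,0,0)],
[(0,1,2,1,0,0),(0,2,0,1,0,1),(1,1,2,0,0,0),(1,2,0,1,0,0),(2,0,1,0,0,1),(2,0,1,0,0,1)],
[(0,1,2,1,0,0),(0,2,1,1,0,0),(1,0,2,0,0,0),(1,2,0,1,0,1),(2,0,1,0,0,1),(2,1,0,0,0,1)],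
[(0,1,2,1,0,0),(0,2,1,1,0,0),(1,0,2,0,0,1),(1,2,0,1,0,1),(2,0,1,0,0,0),(2,1,0,0,0,1)],
[(0,1,2,1,0,0),(0,2,1,1,0,0),(1,0,1,0,0,0),(1,2,0,1,0,0),(2,0,2,0,0,0),(2,1,0,0,0,0)],
[(0,1,0,1,0,0),(0,2,0,1,0,1),(1,0,1,0,0,1),(1,2,1,1,0,1),(2,0,2,0,0,0),(2,1,2,0,0,0)],
[(0,1,2,1,0,0),(0,2,1,1,0,0),(1,0,1,0,0,1),(1,2,0,1,0,1),(2,0,2,0,0,0),(2,1,0,0,0,1)],
[(0,1,2,1,0,0),(0,2,1,1,0,0),(1,0,1,0,0,0),(1,2,0,1,0,1),(2,0,2,0,0,1),(2,1,0,0,0,1)],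
[(0,1,2,1,0,0),(0,2,0,1,0,0),(1,0,2,0,0,0),(1,2,1,1,0,0),(2,0,1,0,0,0),(2,1,0,0,0,0)],
[(0,1,2,1,0,0),(0,2,0,1,0,0),(1,0,2,0,0,0),(1,2,1,1,0,1),(2,0,1,0,0,1),(2,1,0,0,0,1)],
[(0,1,2,1,0,0),(0,2,0,1,0,1),(1,0,2,0,0,0),(1,2,1,1,0,0),(2,0,1,0,0,1),(2,1,0,0,0,1)],
[(0,1,0,1,0,1),(0,2,0,1,0,1),(1,0,1,0,0,0),(1,2,1,1,0,0),(2,0,2,0,0,0),(2,1,2,0,0,1)],
[(0,1,0,1,0,0),(0,2,0,1,0,0),(1,0,1,0,0,0),(1,2,1,1,0,0),(2,0,2,0,0,0),(2,1,2,0,0,0)],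
[(0,1,0,1,0,1),(0,2,1,1,0,1),(1,0,1,0,0,1),(1,2,0,1,0,0),(2,0,2,0,0,0),(2,1,2,0,0,0)],
[(0,1,0,1,0,1),(0,2,0,1,0,1),(1,0,2,0,0,0),(1,2,1,1,0,0),(2,0,1,0,0,1),(2,1,2,0,0,0)],
[(0,1,0,1,0,1),(0,2,1,1,0,0),(1,0,2,0,0,0),(1,2,1,1,0,0),(2,0,2,0,0,1),(2,1,0,0,0,1)],
[(0,1,0,1,0,0),(0,2,0,1,0,0),(1,0,1,0,0,0),(1,2,1,1,0,0),(2,0,2,0,0,0),(2,1,2,0,0,0)],
[(0,1,2,1,0,0),(0,2,0,1,0,0),(1,0,1,0,0,1),(1,2,0,1,0,1),(2,0,1,0,0,1),(2,1,2,0,0,0)],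
[(0,1,0,1,0,1),(0,2,1,1,0,0),(1,0,1,0,0,1),(1,2,0,1,0,1),(2,0,2,0,0,0),(2,1,2,0,0,0)],
[(0,1,0,1,0,1),(0,2,0,1,0,1),(1,0,2,0,0,1),(1,2,1,1,0,0),(2,0,1,0,0,0),(2,1,2,0,0,0)],
[(0,1,0,1,0,0),(0,2,1,1,0,0),(1,0,2,0,0,0),(1,2,0,1,0,0),(2,0,1,0,0,0),(2,1,2,0,0,0)],
[(0,1,0,1,0,1),(0,2,1,1,0,1),(1,0,2,0,0,0),(1,2,0,1,0,0),(2,0,1,0,0,1),(2,1,2,0,0,0)],
[(0,1,0,1,0,1),(0,2,0,1,0,1),(1,0,1,0,0,0),(1,2,1,1,0,1),(2,0,2,0,0,0),(2,1,2,0,0,0)],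
[(0,1,0,1,0,1),(0,2,1,1,0,0),(1,0,2,0,0,1),(1,2,0,1,0,1),(2,0,1,0,0,0),(2,1,2,0,0,0)],
[(0,1,2,1,1,0),(0,2,1,1,0,0),(1,0,2,0,1,0),(1,2,0,1,0,0),(2,0,1,0,0,0),(2,1,0,0,1,0)],
[(0,1,2,1,1,0),(0,2,1,1,0,1),(1,0,2,0,1,0),(1,2,0,1,0,0),(2,0,1,0,0,1),(2,1,0,0,1,1)],
[(0,1,2,1,1,0),(0,2,1,1,0,0),(1,0,2,0,1,0),(1,2,0,1,0,1),(2,0,1,0,0,1),(2,1,0,0,1,1)],
[(0,1,2,1,1,0),(0,2,1,1,0,0),(1,0,0,0,1,1),(1,2,0,1,0,1),(2,0,1,0,0,0),(2,1,2,0,1,1)],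
[(0,1,2,1,1,0),(0,2,1,1,0,0),(1,0,0,0,0,0),(1,2,1,1,0,0),(2,0,0,0,1,0),(2,1,2,0,1,0)],
[(0,1,0,1,1,0),(0,2,0,1,0,1),(1,0,1,0,0,1),(1,2,1,1,0,1),(2,0,2,0,1,0),(2,1,2,0,1,0)],
[(0,1,2,1,1,0),(0,2,1,1,0,0),(1,0,0,0,0,1),(1,2,1,1,0,1),(2,0,0,0,1,1),(2,1,2,0,1,0)],
[(0,1,2,1,1,0),(0,2,1,1,0,0),(1,0,0,0,0,1),(1,2,1,1,0,0),(2,0,0,0,1,1),(2,1,2,0,1,1)],
[(0,1,2,1,1,0),(0,2,0,1,0,0),(1,0,2,0,1,0),(1,2,1,1,0,0),(2,0,1,0,0,0),(2,1,0,0,1,0)],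
[(0,1,2,1,1,0),(0,2,0,1,0,0),(1,0,2,0,1,0),(1,2,1,1,0,1),(2,0,1,0,0,1),(2,1,0,0,1,1)],
[(0,1,2,1,1,0),(0,2,0,1,0,1),(1,0,2,0,1,0),(1,2,1,1,0,0),(2,0,1,0,0,1),(2,1,0,0,1,1)],
[(0,1,0,1,1,1),(0,2,0,1,0,1),(1,0,1,0,0,0),(1,2,1,1,0,0),(2,0,2,0,1,0),(2,1,2,0,1,1)],
[(0,1,0,1,1,0),(0,2,0,1,0,0),(1,0,1,0,0,0),(1,2,1,1,0,0),(2,0,2,0,1,0),(2,1,2,0,1,0)],
[(0,1,0,1,1,1),(0,2,1,1,0,1),(1,0,0,0,0,0),(1,2,1,1,0,1),(2,0,2,0,1,0),(2,1,2,0,1,0)],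
[(0,1,0,1,1,1),(0,2,0,1,0,1),(1,0,2,0,1,0),(1,2,1,1,0,0),(2,0,1,0,0,1),(2,1,2,0,1,0)],
[(0,1,0,1,1,1),(0,2,1,1,0,0),(1,0,2,0,1,0),(1,2,1,1,0,0),(2,0,0,0,0,1),(2,1,2,0,1,1)],
[(0,1,0,1,1,0),(0,2,0,1,0,0),(1,0,1,0,0,0),(1,2,1,1,0,0),(2,0,2,0,1,0),(2,1,2,0,1,0)],
[(0,1,2,1,1,0),(0,2,0,1,0,0),(1,0,0,0,1,1),(1,2,1,1,0,1),(2,0,1,0,0,1),(2,1,2,0,1,0)],
[(0,1,0,1,1,1),(0,2,1,1,0,0),(1,0,0,0,0,1),(1,2,1,1,0,1),(2,0,2,0,1,0),(2,1,2,0,1,0)],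
[(0,1,0,1,1,1),(0,2,0,1,0,1),(1,0,2,0,1,1),(1,2,1,1,0,0),(2,0,1,0,0,0),(2,1,2,0,1,0)],
[(0,1,0,1,1,0),(0,2,1,1,0,0),(1,0,2,0,1,0),(1,2,0,1,0,0),(2,0,1,0,0,0),(2,1,2,0,1,0)],
[(0,1,0,1,1,1),(0,2,1,1,0,1),(1,0,2,0,1,0),(1,2,0,1,0,0),(2,0,1,0,0,1),(2,1,2,0,1,0)],
[(0,1,0,1,1,1),(0,2,0,1,0,1),(1,0,1,0,0,0),(1,2,1,1,0,1),(2,0,2,0,1,0),(2,1,2,0,1,0)],
[(0,1,0,1,1,1),(0,2,1,1,0,0),(1,0,2,0,1,1),(1,2,0,1,0,1),(2,0,1,0,0,0),(2,1,2,0,1,0)],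
[(0,1,2,1,1,0),(0,2,1,1,0,0),(1,0,2,0,1,0),(1,2,0,1,0,0),(2,0,1,0,1,0),(2,1,0,0,0,0)],
[(0,1,2,1,1,0),(0,2,0,1,0,1),(1,0,2,0,1,0),(1,2,0,1,0,0),(2,0,1,0,1,1),(2,1,1,0,0,1)],
[(0,1,2,1,1,0),(0,2,1,1,0,0),(1,0,2,0,1,0),(1,2,0,1,0,1),(2,0,1,0,1,1),(2,1,0,0,0,1)],
[(0,1,1,1,1,0),(0,2,1,1,0,0),(1,0,2,0,1,1),(1,2,0,1,0,1),(2,0,2,0,1,0),(2,1,0,0,0,1)],
[(0,1,1,1,1,0),(0,2,1,1,0,0),(1,1,0,0,0,0),(1,2,0,1,0,0),(2,0,2,0,1,0),(2,0,2,0,1,0)],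
[(0,1,0,1,0,0),(0,2,0,1,0,1),(1,0,1,0,1,1),(1,2,1,1,0,1),(2,0,2,0,1,0),(2,1,2,0,1,0)],
[(0,1,2,1,1,0),(0,2,1,1,0,0),(1,0,1,0,1,1),(1,2,0,1,0,1),(2,0,2,0,1,0),(2,1,0,0,0,1)],
[(0,1,1,1,1,0),(0,2,1,1,0,0),(1,0,2,0,1,0),(1,2,0,1,0,1),(2,0,2,0,1,1),(2,1,0,0,0,1)],
[(0,1,2,1,1,0),(0,2,0,1,0,0),(1,0,2,0,1,0),(1,2,1,1,0,0),(2,0,1,0,1,0),(2,1,0,0,0,0)],
[(0,1,2,1,1,0),(0,2,0,1,0,0),(1,0,2,0,1,0),(1,2,0,1,0,1),(2,0,1,0,1,1),(2,1,1,0,0,1)],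
[(0,1,2,1,1,0),(0,2,0,1,0,1),(1,0,2,0,1,0),(1,2,1,1,0,0),(2,0,1,0,1,1),(2,1,0,0,0,1)],
[(0,1,0,1,0,1),(0,2,0,1,0,1),(1,0,1,0,1,0),(1,2,1,1,0,0),(2,0,2,0,1,0),(2,1,2,0,1,1)],
[(0,1,0,1,0,0),(0,2,0,1,0,0),(1,0,1,0,1,0),(1,2,1,1,0,0),(2,0,2,0,1,0),(2,1,2,0,1,0)],
[(0,1,0,1,0,1),(0,2,1,1,0,1),(1,0,1,0,1,1),(1,2,0,1,0,0),(2,0,2,0,1,0),(2,1,2,0,1,0)],
[(0,1,0,1,0,1),(0,2,0,1,0,1),(1,0,2,0,1,0),(1,2,1,1,0,0),(2,0,1,0,1,1),(2,1,2,0,1,0)],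
[(0,1,1,1,1,0),(0,2,0,1,0,1),(1,0,2,0,1,0),(1,2,1,1,0,0),(2,0,2,0,1,1),(2,1,0,0,0,1)],
[(0,1,0,1,0,0),(0,2,0,1,0,0),(1,0,1,0,1,0),(1,2,1,1,0,0),(2,0,2,0,1,0),(2,1,2,0,1,0)],
[(0,1,2,1,1,0),(0,2,0,1,0,0),(1,0,1,0,1,1),(1,2,0,1,0,1),(2,0,2,0,1,0),(2,1,1,0,0,1)],
[(0,1,0,1,0,1),(0,2,1,1,0,0),(1,0,1,0,1,1),(1,2,0,1,0,1),(2,0,2,0,1,0),(2,1,2,0,1,0)],
[(0,1,0,1,0,1),(0,2,0,1,0,1),(1,0,2,0,1,1),(1,2,1,1,0,0),(2,0,1,0,1,0),(2,1,2,0,1,0)],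
[(0,1,0,1,0,0),(0,2,1,1,0,0),(1,0,2,0,1,0),(1,2,0,1,0,0),(2,0,1,0,1,0),(2,1,2,0,1,0)],
[(0,1,0,1,0,1),(0,2,1,1,0,1),(1,0,2,0,1,0),(1,2,0,1,0,0),(2,0,1,0,1,1),(2,1,2,0,1,0)],
[(0,1,0,1,0,1),(0,2,0,1,0,1),(1,0,1,0,1,0),(1,2,1,1,0,1),(2,0,2,0,1,0),(2,1,2,0,1,0)],
[(0,1,0,1,0,1),(0,2,1,1,0,0),(1,0,2,0,1,1),(1,2,0,1,0,1),(2,0,1,0,1,0),(2,1,2,0,1,0)],
[(0,1,2,1,0,0),(0,2,1,1,1,0),(1,0,2,0,1,0),(1,2,0,1,0,0),(2,0,1,0,1,0),(2,1,0,0,0,0)],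
[(0,1,0,1,0,0),(0,2,0,1,0,1),(1,1,2,0,0,0),(1,2,2,1,1,0),(2,0,1,0,1,1),(2,0,1,0,1,1)],
[(0,1,2,1,0,0),(0,2,1,1,1,0),(1,0,2,0,1,0),(1,2,0,1,0,1),(2,0,1,0,1,1),(2,1,0,0,0,1)],
[(0,1,2,1,0,0),(0,2,1,1,1,0),(1,0,2,0,1,1),(1,2,0,1,0,1),(2,0,1,0,1,0),(2,1,0,0,0,1)],
[(0,1,2,1,0,0),(0,2,1,1,1,0),(1,0,1,0,1,0),(1,2,0,1,0,0),(2,0,2,0,1,0),(2,1,0,0,0,0)],
[(0,1,0,1,0,0),(0,2,0,1,0,1),(1,0,1,0,1,1),(1,2,1,1,1,1),(2,0,2,0,1,0),(2,1,2,0,0,0)],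
[(0,1,2,1,0,0),(0,2,1,1,1,0),(1,0,1,0,1,1),(1,2,0,1,0,1),(2,0,2,0,1,0),(2,1,0,0,0,1)],
[(0,1,2,1,0,0),(0,2,1,1,1,0),(1,0,1,0,1,0),(1,2,0,1,0,1),(2,0,2,0,1,1),(2,1,0,0,0,1)],
[(0,1,0,1,0,0),(0,2,0,1,0,0),(1,1,2,0,0,0),(1,2,2,1,1,0),(2,0,1,0,1,0),(2,0,1,0,1,0)],
[(0,1,0,1,0,0),(0,2,2,1,0,0),(1,0,1,0,1,1),(1,2,2,1,1,0),(2,0,1,0,1,1),(2,1,0,0,0,1)],
[(0,1,0,1,0,1),(0,2,1,1,1,0),(1,0,2,0,1,0),(1,2,2,1,0,0),(2,0,1,0,1,1),(2,1,0,0,0,1)],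
[(0,1,0,1,0,1),(0,2,0,1,0,1),(1,0,1,0,1,0),(1,2,1,1,1,0),(2,0,2,0,1,0),(2,1,2,0,0,1)],
[(0,1,0,1,0,0),(0,2,0,1,0,0),(1,0,1,0,1,0),(1,2,1,1,1,0),(2,0,2,0,1,0),(2,1,2,0,0,0)],
[(0,1,0,1,0,1),(0,2,1,1,1,1),(1,0,1,0,1,1),(1,2,0,1,0,0),(2,0,2,0,1,0),(2,1,2,0,0,0)],
[(0,1,0,1,0,1),(0,2,0,1,0,1),(1,0,1,0,1,0),(1,2,2,1,1,0),(2,0,1,0,1,1),(2,1,2,0,0,0)],
[(0,1,0,1,0,1),(0,2,1,1,1,0),(1,0,1,0,1,0),(1,2,2,1,0,0),(2,0,2,0,1,1),(2,1,0,0,0,1)],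
[(0,1,0,1,0,0),(0,2,0,1,0,0),(1,0,1,0,1,0),(1,2,1,1,1,0),(2,0,2,0,1,0),(2,1,2,0,0,0)],
[(0,1,0,1,0,0),(0,2,2,1,0,0),(1,0,1,0,1,1),(1,2,1,1,1,1),(2,0,2,0,1,0),(2,1,0,0,0,1)],
[(0,1,0,1,0,1),(0,2,1,1,1,0),(1,0,1,0,1,1),(1,2,0,1,0,1),(2,0,2,0,1,0),(2,1,2,0,0,0)],
[(0,1,0,1,0,1),(0,2,0,1,0,1),(1,0,1,0,1,0),(1,2,2,1,1,1),(2,0,1,0,1,0),(2,1,2,0,0,0)],
[(0,1,0,1,0,0),(0,2,0,1,0,0),(1,1,2,0,0,0),(1,2,2,1,1,0),(2,0,1,0,1,0),(2,0,1,0,1,0)],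
[(0,1,0,1,0,1),(0,2,1,1,1,1),(1,0,2,0,1,0),(1,2,0,1,0,0),(2,0,1,0,1,1),(2,1,2,0,0,0)],
[(0,1,0,1,0,1),(0,2,0,1,0,1),(1,0,1,0,1,0),(1,2,1,1,1,1),(2,0,2,0,1,0),(2,1,2,0,0,0)],
[(0,1,0,1,0,1),(0,2,1,1,1,0),(1,0,2,0,1,1),(1,2,0,1,0,1),(2,0,1,0,1,0),(2,1,2,0,0,0)],
[(0,1,2,1,0,0),(0,2,1,1,0,0),(1,0,2,0,0,0),(1,2,0,0,0,0),(2,0,1,0,0,0),(2,1,0,1,0,0)],
[(0,1,0,1,0,0),(0,1,0,1,0,1),(1,0,2,0,0,0),(1,0,2,0,0,0),(2,2,1,0,0,1),(2,2,1,1,0,1)],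
[(0,1,2,1,0,0),(0,1,2,1,0,0),(1,0,1,0,0,0),(1,0,1,0,0,1),(2,2,0,0,0,1),(2,2,0,1,0,1)],
[(0,1,2,1,0,0),(0,2,1,1,0,0),(1,0,2,0,0,1),(1,2,0,0,0,1),(2,0,1,0,0,0),(2,1,0,1,0,1)],
[(0,1,2,1,0,0),(0,1,2,1,0,0),(1,0,1,0,0,0),(1,0,1,0,0,0),(2,2,0,0,0,0),(2,2,0,1,0,0)],
[(0,1,0,1,0,0),(0,2,0,1,0,1),(1,0,1,0,0,1),(1,2,1,0,0,1),(2,0,2,0,0,0),(2,1,2,1,0,0)],
[(0,1,2,1,0,0),(0,1,2,1,0,0),(1,0,1,0,0,1),(1,2,0,0,0,1),(2,0,1,0,0,0),(2,2,0,1,0,1)],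
[(0,1,2,1,0,0),(0,2,1,1,0,0),(1,0,1,0,0,0),(1,0,2,0,0,1),(2,1,0,1,0,1),(2,2,0,0,0,1)],
[(0,1,0,1,0,0),(0,1,0,1,0,0),(1,0,2,0,0,0),(1,0,2,0,0,0),(2,2,1,0,0,0),(2,2,1,1,0,0)],
[(0,1,0,1,0,0),(0,1,2,1,0,0),(1,0,1,0,0,1),(1,0,2,0,0,0),(2,2,0,0,0,1),(2,2,1,1,0,1)],
[(0,1,0,1,0,1),(0,1,2,1,0,0),(1,0,1,0,0,0),(1,0,2,0,0,0),(2,2,0,0,0,1),(2,2,1,1,0,1)],
[(0,1,0,1,0,1),(0,1,0,1,0,1),(1,0,2,0,0,0),(1,2,1,0,0,0),(2,0,2,0,0,1),(2,2,1,1,0,0)],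
[(0,1,0,1,0,0),(0,2,0,1,0,0),(1,0,1,0,0,0),(1,2,1,0,0,0),(2,0,2,0,0,0),(2,1,2,1,0,0)],
[(0,1,0,1,0,1),(0,2,1,1,0,1),(1,0,1,0,0,1),(1,0,2,0,0,0),(2,1,2,1,0,0),(2,2,0,0,0,0)],
[(0,1,0,1,0,1),(0,1,0,1,0,1),(1,0,2,0,0,0),(1,0,2,0,0,0),(2,2,1,0,0,0),(2,2,1,1,0,1)],
[(0,1,0,1,0,1),(0,1,2,1,0,0),(1,0,1,0,0,0),(1,2,1,0,0,0),(2,0,2,0,0,1),(2,2,0,1,0,1)],
[(0,1,0,1,0,0),(0,1,2,1,0,0),(1,0,1,0,0,0),(1,2,0,0,0,0),(2,0,2,0,0,0),(2,2,1,1,0,0)],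
[(0,1,0,1,0,0),(0,1,2,1,0,0),(1,0,1,0,0,1),(1,2,0,0,0,1),(2,0,2,0,0,0),(2,2,1,1,0,1)],
[(0,1,0,1,0,1),(0,1,2,1,0,0),(1,0,1,0,0,1),(1,2,0,0,0,1),(2,0,2,0,0,0),(2,2,1,1,0,0)],
[(0,1,0,1,0,1),(0,1,0,1,0,1),(1,0,2,0,0,0),(1,0,2,0,0,1),(2,2,1,0,0,0),(2,2,1,1,0,0)],
[(0,1,0,1,0,0),(0,1,0,1,0,0),(1,0,2,0,0,0),(1,0,2,0,0,0),(2,2,1,0,0,0),(2,2,1,1,0,0)],
[(0,1,0,1,0,1),(0,2,1,1,0,1),(1,0,2,0,0,0),(1,0,2,0,0,0),(2,1,0,1,0,0),(2,2,1,0,0,1)],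
[(0,1,0,1,0,1),(0,1,0,1,0,1),(1,0,2,0,0,0),(1,2,1,0,0,1),(2,0,2,0,0,0),(2,2,1,1,0,0)],
[(0,1,0,1,0,1),(0,1,2,1,0,0),(1,0,2,0,0,1),(1,2,0,0,0,1),(2,0,1,0,0,0),(2,2,1,1,0,0)],
[(0,1,2,1,1,0),(0,1,2,1,1,0),(1,0,0,0,0,0),(1,0,0,0,1,0),(2,2,1,0,0,0),(2,2,1,1,0,0)],
[(0,1,0,1,1,1),(0,1,2,1,1,0),(1,0,0,0,0,0),(1,0,2,0,1,0),(2,2,1,0,0,1),(2,2,1,1,0,1)],
[(0,1,2,1,1,0),(0,1,2,1,1,0),(1,0,0,0,0,1),(1,2,1,0,0,0),(2,0,0,0,1,1),(2,2,1,1,0,1)],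
[(0,1,2,1,1,0),(0,2,1,1,0,0),(1,0,0,0,0,1),(1,0,0,0,1,1),(2,1,2,1,1,1),(2,2,1,0,0,0)],
[(0,1,2,1,1,0),(0,1,2,1,1,0),(1,0,1,0,0,0),(1,2,1,0,0,0),(2,0,0,0,1,0),(2,2,0,1,0,0)],
[(0,1,0,1,1,0),(0,2,0,1,0,1),(1,0,1,0,0,1),(1,2,1,0,0,1),(2,0,2,0,1,0),(2,1,2,1,1,0)],
[(0,1,2,1,1,0),(0,1,2,1,1,0),(1,0,0,0,0,1),(1,0,0,0,1,1),(2,2,1,0,0,0),(2,2,1,1,0,1)],
[(0,1,2,1,1,0),(0,2,1,1,0,0),(1,0,0,0,0,1),(1,2,1,0,0,0),(2,0,0,0,1,1),(2,1,2,1,1,1)],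
[(0,1,0,1,1,0),(0,1,2,1,1,0),(1,0,1,0,0,0),(1,0,2,0,1,0),(2,2,0,0,0,0),(2,2,1,1,0,0)],
[(0,1,0,1,1,0),(0,1,2,1,1,0),(1,0,0,0,0,1),(1,0,2,0,1,0),(2,2,1,0,0,1),(2,2,1,1,0,1)],
[(0,1,0,1,1,1),(0,1,2,1,1,0),(1,0,1,0,0,0),(1,0,2,0,1,0),(2,2,0,0,0,1),(2,2,1,1,0,1)],
[(0,1,0,1,1,1),(0,1,2,1,1,1),(1,0,1,0,0,0),(1,0,2,0,1,0),(2,2,0,0,0,1),(2,2,1,1,0,0)],
[(0,1,0,1,1,0),(0,2,0,1,0,0),(1,0,1,0,0,0),(1,2,1,0,0,0),(2,0,2,0,1,0),(2,1,2,1,1,0)],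
[(0,1,0,1,1,1),(0,2,1,1,0,1),(1,0,0,0,0,0),(1,2,1,0,0,1),(2,0,2,0,1,0),(2,1,2,1,1,0)],
[(0,1,0,1,1,1),(0,2,0,1,0,1),(1,0,1,0,0,0),(1,0,2,0,1,0),(2,1,2,1,1,0),(2,2,1,0,0,1)],
[(0,1,0,1,1,1),(0,1,2,1,1,0),(1,0,1,0,0,0),(1,2,1,0,0,0),(2,0,2,0,1,1),(2,2,0,1,0,1)],
[(0,1,0,1,1,0),(0,1,2,1,1,0),(1,0,0,0,0,0),(1,2,1,0,0,0),(2,0,2,0,1,0),(2,2,1,1,0,0)],
[(0,1,0,1,1,0),(0,1,2,1,1,0),(1,0,0,0,0,1),(1,2,1,0,0,1),(2,0,2,0,1,0),(2,2,1,1,0,1)],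
[(0,1,0,1,1,1),(0,1,2,1,1,0),(1,0,0,0,0,1),(1,2,1,0,0,1),(2,0,2,0,1,0),(2,2,1,1,0,0)],
[(0,1,0,1,1,1),(0,1,2,1,1,1),(1,0,0,0,0,1),(1,0,2,0,1,0),(2,2,1,0,0,0),(2,2,1,1,0,0)],
[(0,1,0,1,1,0),(0,2,1,1,0,0),(1,0,0,0,0,0),(1,0,2,0,1,0),(2,1,2,1,1,0),(2,2,1,0,0,0)],
[(0,1,0,1,1,1),(0,2,1,1,0,1),(1,0,0,0,0,0),(1,0,2,0,1,0),(2,1,2,1,1,0),(2,2,1,0,0,1)],
[(0,1,0,1,1,1),(0,2,0,1,0,1),(1,0,1,0,0,0),(1,2,1,0,0,1),(2,0,2,0,1,0),(2,1,2,1,1,0)],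
[(0,1,0,1,1,1),(0,1,2,1,1,0),(1,0,0,0,0,1),(1,0,2,0,1,1),(2,2,1,0,0,0),(2,2,1,1,0,0)],
[(0,1,1,1,0,0),(0,1,1,1,1,0),(1,0,2,0,1,0),(1,0,2,0,1,0),(2,2,0,0,0,0),(2,2,0,1,0,0)],
[(0,1,0,1,0,0),(0,1,1,1,1,1),(1,0,2,0,1,0),(1,0,2,0,1,0),(2,2,0,0,0,1),(2,2,1,1,0,1)],
[(0,1,1,1,0,0),(0,1,2,1,1,0),(1,0,1,0,1,1),(1,0,2,0,1,0),(2,2,0,0,0,1),(2,2,0,1,0,1)],
[(0,1,1,1,0,0),(0,1,1,1,1,0),(1,0,2,0,1,1),(1,2,0,0,0,1),(2,0,2,0,1,0),(2,2,0,1,0,1)],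
[(0,1,1,1,0,0),(0,1,2,1,1,0),(1,0,1,0,1,0),(1,2,0,0,0,0),(2,0,2,0,1,0),(2,2,0,1,0,0)],
[(0,1,0,1,0,0),(0,2,0,1,0,1),(1,0,1,0,1,1),(1,2,1,0,0,1),(2,0,2,0,1,0),(2,1,2,1,1,0)],
[(0,1,1,1,0,0),(0,1,2,1,1,0),(1,0,1,0,1,1),(1,2,0,0,0,1),(2,0,2,0,1,0),(2,2,0,1,0,1)],
[(0,1,1,1,0,0),(0,1,1,1,1,0),(1,0,2,0,1,0),(1,0,2,0,1,1),(2,2,0,0,0,1),(2,2,0,1,0,1)],
[(0,1,0,1,0,0),(0,1,2,1,1,0),(1,0,1,0,1,0),(1,0,2,0,1,0),(2,2,0,0,0,0),(2,2,1,1,0,0)],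
[(0,1,0,1,0,0),(0,1,2,1,1,0),(1,0,1,0,1,1),(1,0,2,0,1,0),(2,2,0,0,0,1),(2,2,1,1,0,1)],
[(0,1,0,1,0,1),(0,1,1,1,1,0),(1,0,2,0,1,0),(1,0,2,0,1,0),(2,2,0,0,0,1),(2,2,1,1,0,1)],
[(0,1,0,1,0,1),(0,1,2,1,1,1),(1,0,1,0,1,0),(1,0,2,0,1,0),(2,2,0,0,0,1),(2,2,1,1,0,0)],
[(0,1,0,1,0,0),(0,1,1,1,1,0),(1,0,2,0,1,0),(1,2,1,0,0,0),(2,0,2,0,1,0),(2,2,0,1,0,0)],
[(0,1,0,1,0,1),(0,1,1,1,1,1),(1,0,2,0,1,0),(1,2,1,0,0,1),(2,0,2,0,1,0),(2,2,0,1,0,0)],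
[(0,1,0,1,0,1),(0,1,1,1,1,1),(1,0,2,0,1,0),(1,0,2,0,1,0),(2,2,0,0,0,1),(2,2,1,1,0,0)],
[(0,1,0,1,0,1),(0,1,1,1,1,0),(1,0,2,0,1,0),(1,2,1,0,0,0),(2,0,2,0,1,1),(2,2,0,1,0,1)],
[(0,1,0,1,0,0),(0,1,2,1,1,0),(1,0,1,0,1,0),(1,2,0,0,0,0),(2,0,2,0,1,0),(2,2,1,1,0,0)],
[(0,1,0,1,0,0),(0,1,2,1,1,0),(1,0,1,0,1,1),(1,2,0,0,0,1),(2,0,2,0,1,0),(2,2,1,1,0,1)],
[(0,1,0,1,0,1),(0,1,2,1,1,0),(1,0,1,0,1,1),(1,2,0,0,0,1),(2,0,2,0,1,0),(2,2,1,1,0,0)],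
[(0,1,0,1,0,1),(0,1,2,1,1,1),(1,0,1,0,1,0),(1,2,0,0,0,1),(2,0,2,0,1,0),(2,2,1,1,0,0)],
[(0,1,0,1,0,0),(0,1,1,1,1,0),(1,0,2,0,1,0),(1,2,0,0,0,0),(2,0,2,0,1,0),(2,2,1,1,0,0)],
[(0,1,0,1,0,1),(0,1,1,1,1,1),(1,0,2,0,1,0),(1,0,2,0,1,0),(2,2,0,0,0,0),(2,2,1,1,0,1)],
[(0,1,0,1,0,1),(0,1,1,1,1,1),(1,0,2,0,1,0),(1,2,0,0,0,1),(2,0,2,0,1,0),(2,2,1,1,0,0)],
[(0,1,0,1,0,1),(0,1,1,1,1,0),(1,0,2,0,1,1),(1,2,0,0,0,1),(2,0,2,0,1,0),(2,2,1,1,0,0)],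
[(0,1,2,1,0,0),(0,2,1,1,1,0),(1,0,2,0,1,0),(1,2,0,0,0,0),(2,0,1,0,1,0),(2,1,0,1,0,0)],
[(0,1,0,1,0,0),(0,1,0,1,0,1),(1,0,2,0,1,0),(1,2,2,0,0,0),(2,0,1,0,1,1),(2,2,1,1,1,1)],
[(0,1,2,1,0,0),(0,2,1,1,1,0),(1,0,1,0,1,1),(1,0,2,0,1,0),(2,1,0,1,0,1),(2,2,0,0,0,1)],
[(0,1,2,1,0,0),(0,2,1,1,1,0),(1,0,2,0,1,1),(1,2,0,0,0,1),(2,0,1,0,1,0),(2,1,0,1,0,1)],
[(0,1,2,1,0,0),(0,2,1,1,1,0),(1,0,1,0,1,0),(1,2,0,0,0,0),(2,0,2,0,1,0),(2,1,0,1,0,0)],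
[(0,1,0,1,0,0),(0,1,0,1,0,1),(1,0,1,0,1,1),(1,0,1,0,1,1),(2,2,2,0,0,0),(2,2,2,1,1,0)],
[(0,1,2,1,0,0),(0,2,1,1,1,0),(1,0,1,0,1,1),(1,2,0,0,0,1),(2,0,2,0,1,0),(2,1,0,1,0,1)],
[(0,1,2,1,0,0),(0,2,1,1,1,0),(1,0,1,0,1,0),(1,0,2,0,1,1),(2,1,0,1,0,1),(2,2,0,0,0,1)],
[(0,1,0,1,0,0),(0,1,0,1,0,0),(1,0,2,0,1,0),(1,2,2,0,0,0),(2,0,1,0,1,0),(2,2,1,1,1,0)],
[(0,1,0,1,0,0),(0,1,2,1,0,0),(1,0,1,0,1,1),(1,0,2,0,1,0),(2,2,0,0,0,1),(2,2,1,1,1,1)],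
[(0,1,0,1,0,1),(0,1,2,1,0,0),(1,0,1,0,1,0),(1,0,2,0,1,0),(2,2,0,0,0,1),(2,2,1,1,1,1)],
[(0,1,0,1,0,1),(0,1,0,1,0,1),(1,0,1,0,1,0),(1,0,1,0,1,0),(2,2,2,0,0,0),(2,2,2,1,1,1)],
[(0,1,0,1,0,0),(0,1,0,1,0,0),(1,0,1,0,1,0),(1,0,1,0,1,0),(2,2,2,0,0,0),(2,2,2,1,1,0)],
[(0,1,0,1,0,1),(0,2,1,1,1,1),(1,0,1,0,1,1),(1,0,2,0,1,0),(2,1,0,1,0,0),(2,2,2,0,0,0)],
[(0,1,0,1,0,1),(0,1,0,1,0,1),(1,0,1,0,1,0),(1,0,2,0,1,0),(2,2,1,0,1,1),(2,2,2,1,0,0)],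
[(0,1,0,1,0,1),(0,1,2,1,0,0),(1,0,1,0,1,0),(1,0,1,0,1,0),(2,2,0,0,0,1),(2,2,2,1,1,1)],
[(0,1,0,1,0,0),(0,1,0,1,0,0),(1,0,1,0,1,0),(1,0,1,0,1,0),(2,2,2,0,0,0),(2,2,2,1,1,0)],
[(0,1,0,1,0,0),(0,1,2,1,0,0),(1,0,1,0,1,1),(1,0,1,0,1,1),(2,2,0,0,0,1),(2,2,2,1,1,0)],
[(0,1,0,1,0,1),(0,1,2,1,0,0),(1,0,1,0,1,1),(1,2,0,0,0,1),(2,0,1,0,1,0),(2,2,2,1,1,0)],
[(0,1,0,1,0,1),(0,1,0,1,0,1),(1,0,1,0,1,0),(1,0,2,0,1,1),(2,2,1,0,1,0),(2,2,2,1,0,0)],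
[(0,1,0,1,0,0),(0,1,0,1,0,0),(1,0,2,0,1,0),(1,2,2,0,0,0),(2,0,1,0,1,0),(2,2,1,1,1,0)],
[(0,1,0,1,0,1),(0,2,1,1,1,1),(1,0,2,0,1,0),(1,2,0,0,0,0),(2,0,1,0,1,1),(2,1,2,1,0,0)],
[(0,1,0,1,0,1),(0,1,0,1,0,1),(1,0,1,0,1,0),(1,0,1,0,1,1),(2,2,2,0,0,0),(2,2,2,1,1,0)],
[(0,1,0,1,0,1),(0,1,2,1,0,0),(1,0,2,0,1,1),(1,2,0,0,0,1),(2,0,1,0,1,0),(2,2,1,1,1,0)]]"

lemma certificates_correct:
  "list_all (\<lambda>((c0, c1, p, c2), W). balanced c0 c1 c2 W \<and> list_all (layer_ok c0 c1 p c2) W)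
     (zip configurations certificates)"
  by code_simp

lemma certificates_length: "length certificates = length configurations"
  by code_simp

lemma balanced_layers_exist:
  assumes "c0 < 4" "c1 < 4" "p < 6" "c2 < 4"
  shows "\<exists>W. balanced c0 c1 c2 W \<and> list_all (layer_ok c0 c1 p c2) W"
proof -
  have "(c0, c1, p, c2) \<in> set configurations"
    using assms unfolding configurations_def by force
  then obtain i where i: "i < length configurations" "configurations ! i = (c0, c1, p, c2)"
    by (metis in_set_conv_nth)
  then have "balanced c0 c1 c2 (certificates ! i) \<and> list_all (layer_ok c0 c1 p c2) (certificates ! i)"
    using certificates_correct certificates_length unfolding list_all_length by fastforce
  then show ?thesis
    by blast
qed

section \<open>Segments between rich vertices\<close>

text \<open>A segment of the cycle from \<open>l\<close> to \<open>r\<close>, with lists of size 3 at both ends and of size 2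
  strictly between them; its right end is \<open>r mod n\<close>, so \<open>r = n\<close> closes the cycle at \<open>0\<close>. A
  labelling \<open>e\<close> of \<open>L l\<close> by \<open>{0,1,2}\<close> induces a labelling \<^term>\<open>right_label\<close> of the right end
  and, for each bit, a colouring of the inner vertices, which are compatible as prescribed by
  \<^const>\<open>segment_ok\<close>.\<close>

locale cycle_segment =
  fixes n :: nat and L :: "nat \<Rightarrow> 'b set" and VH :: "'b set" and EH :: "'b \<Rightarrow> 'b \<Rightarrow> bool"
    and l r :: nat and e :: "nat \<Rightarrow> 'b"
  assumes cov: "corr_cover {0..<n} (cycle_edge n) L VH EH"
    and n3: "n \<ge> 3" and l_less_r: "l < r" and r_le_n: "r \<le> n"
    and finite_lists: "\<forall>v<n. finite (L v)"
    and card_left: "card (L l) = 3" and card_right: "card (L (r mod n)) = 3"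
    and card_inner: "\<forall>i. l < i \<longrightarrow> i < r \<longrightarrow> card (L i) = 2"
    and labels: "bij_betw e {0..<3} (L l)"
begin

definition right_end :: nat where
  "right_end = r mod n"

definition adjacent :: bool where
  "adjacent \<longleftrightarrow> r = Suc l"

lemma l_less_n: "l < n"
  using l_less_r r_le_n by simp

lemma right_end_less_n: "right_end < n"
  unfolding right_end_def using n3 by simp

lemma card_right_end: "card (L right_end) = 3"
  using card_right unfolding right_end_def .

lemma label_in: "x < 3 \<Longrightarrow> e x \<in> L l"
  using labels unfolding bij_betw_def by auto

lemma label_inject: "x < 3 \<Longrightarrow> y < 3 \<Longrightarrow> e x = e y \<Longrightarrow> x = y"
  using labels unfolding bij_betw_def inj_on_def by auto

lemma segment_edge:
  assumes "l \<le> i" "i < r"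
  shows "i < n" "Suc i mod n = (if Suc i = r then right_end else Suc i)" "Suc i mod n < n"
    "cycle_edge n i (Suc i mod n)" "cycle_edge n (Suc i mod n) i"
  using assms r_le_n n3 cycle_edge_Suc_mod[of i n] unfolding right_end_def by auto

lemma inner_vertex:
  assumes "l < i" "i < r"
  shows "i < n" "finite (L i)" "card (L i) = 2"
  using assms r_le_n finite_lists card_inner by auto

lemma segment_edge_injection:
  assumes "l \<le> i" "i < r"
  shows "card (L i) \<le> card (L (Suc i mod n)) \<Longrightarrow> \<exists>h. edge_injection EH (L i) (L (Suc i mod n)) h"
    "card (L (Suc i mod n)) \<le> card (L i) \<Longrightarrow> \<exists>h. edge_injection EH (L (Suc i mod n)) (L i) h"
  using corr_cover_edge_injection[OF cov] segment_edge[OF assms] finite_lists by auto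

definition across :: "'b \<Rightarrow> 'b" where
  "across = (SOME h. edge_injection EH (L l) (L right_end) h)"

lemma across:
  assumes adjacent
  shows "bij_betw across (L l) (L right_end)"
    "\<And>x y. x \<in> L l \<Longrightarrow> y \<in> L right_end \<Longrightarrow> EH x y \<Longrightarrow> across x = y"
proof -
  have "Suc l mod n = right_end"
    using assms segment_edge(2)[of l] l_less_r unfolding adjacent_def by simp
  then have "\<exists>h. edge_injection EH (L l) (L right_end) h"
    using segment_edge_injection(1)[of l] l_less_r card_left card_right_end by simp
  then have "edge_injection EH (L l) (L right_end) across"
    unfolding across_def by (rule someI_ex)
  then show "bij_betw across (L l) (L right_end)"
    "\<And>x y. x \<in> L l \<Longrightarrow> y \<in> L right_end \<Longrightarrow> EH x y \<Longrightarrow> across x = y"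
    using inj_on_card_eq_imp_bij_betw[of across "L l" "L right_end"] finite_lists right_end_less_n
      card_left card_right_end
    unfolding edge_injection_def by auto
qed

lemma not_adjacent_Suc_l: "\<not> adjacent \<Longrightarrow> Suc l < r"
  using l_less_r unfolding adjacent_def by simp

definition to_left :: "'b \<Rightarrow> 'b" where
  "to_left = (SOME h. edge_injection EH (L (Suc l)) (L l) h)"

lemma to_left:
  assumes "\<not> adjacent"
  shows "inj_on to_left (L (Suc l))" "to_left ` L (Suc l) \<subseteq> L l"
    "\<And>c x. c \<in> L (Suc l) \<Longrightarrow> x \<in> L l \<Longrightarrow> EH c x \<Longrightarrow> to_left c = x"
proof -
  have "Suc l mod n = Suc l" "card (L (Suc l)) = 2"
    using not_adjacent_Suc_l[OF assms] segment_edge(2)[of l] inner_vertex[of "Suc l"] by auto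
  then have "\<exists>h. edge_injection EH (L (Suc l)) (L l) h"
    using segment_edge_injection(2)[of l] l_less_r card_left by simp
  then have "edge_injection EH (L (Suc l)) (L l) to_left"
    unfolding to_left_def by (rule someI_ex)
  then show "inj_on to_left (L (Suc l))" "to_left ` L (Suc l) \<subseteq> L l"
    "\<And>c x. c \<in> L (Suc l) \<Longrightarrow> x \<in> L l \<Longrightarrow> EH c x \<Longrightarrow> to_left c = x"
    unfolding edge_injection_def by auto
qed

definition step :: "nat \<Rightarrow> 'b \<Rightarrow> 'b" where
  "step i = (SOME t. bij_betw t (L i) (L (Suc i)) \<and> (\<forall>c\<in>L i. \<not> EH c (t c)))"

lemma step:
  assumes "l < i" "Suc i < r"
  shows "bij_betw (step i) (L i) (L (Suc i))" "\<And>c. c \<in> L i \<Longrightarrow> \<not> EH c (step i c)"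
proof -
  have "Suc i mod n = Suc i"
    using segment_edge(2)[of i] assms by simp
  moreover have "finite (L i)" "card (L i) = 2" "card (L (Suc i)) = 2"
    using inner_vertex[of i] inner_vertex[of "Suc i"] assms by auto
  ultimately have "\<exists>t. bij_betw t (L i) (L (Suc i)) \<and> (\<forall>c\<in>L i. \<not> EH c (t c))"
    using segment_edge_injection(1)[of i] edge_avoiding_bij assms by fastforce
  from someI_ex[OF this] show "bij_betw (step i) (L i) (L (Suc i))"
    "\<And>c. c \<in> L i \<Longrightarrow> \<not> EH c (step i c)"
    unfolding step_def by auto
qed

primrec carry_steps :: "nat \<Rightarrow> 'b \<Rightarrow> 'b" where
  "carry_steps 0 = id"
| "carry_steps (Suc k) = step (Suc l + k) \<circ> carry_steps k"

definition carry :: "nat \<Rightarrow> 'b \<Rightarrow> 'b" where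
  "carry i = carry_steps (i - Suc l)"

lemma bij_betw_carry_steps: "Suc l + k < r \<Longrightarrow> bij_betw (carry_steps k) (L (Suc l)) (L (Suc l + k))"
proof (induction k)
  case 0
  then show ?case
    by (simp add: bij_betw_def)
next
  case (Suc k)
  have "bij_betw (step (Suc l + k)) (L (Suc l + k)) (L (Suc (Suc l + k)))"
    using step(1)[of "Suc l + k"] Suc.prems by simp
  moreover have "bij_betw (carry_steps k) (L (Suc l)) (L (Suc l + k))"
    using Suc by simp
  ultimately show ?case
    using bij_betw_trans[of "carry_steps k"] by (simp only: carry_steps.simps add_Suc_right)
qed

lemma bij_betw_carry: "Suc l \<le> i \<Longrightarrow> i < r \<Longrightarrow> bij_betw (carry i) (L (Suc l)) (L i)"
  unfolding carry_def using bij_betw_carry_steps[of "i - Suc l"] by simp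

lemma carry_first: "carry (Suc l) = id"
  unfolding carry_def by simp

lemma carry_Suc:
  assumes "Suc l \<le> i"
  shows "carry (Suc i) = step i \<circ> carry i"
proof -
  have "Suc i - Suc l = Suc (i - Suc l)" "Suc (l + (i - Suc l)) = i"
    using assms by arith+
  then show ?thesis
    unfolding carry_def by (simp only: carry_steps.simps add_Suc)
qed

definition to_right :: "'b \<Rightarrow> 'b" where
  "to_right = (SOME h. edge_injection EH (L (r - 1)) (L right_end) h)"

lemma to_right:
  assumes "\<not> adjacent"
  shows "inj_on to_right (L (r - 1))" "to_right ` L (r - 1) \<subseteq> L right_end"
    "\<And>c y. c \<in> L (r - 1) \<Longrightarrow> y \<in> L right_end \<Longrightarrow> EH c y \<Longrightarrow> to_right c = y"
proof -
  have "Suc (r - 1) mod n = right_end" "card (L (r - 1)) = 2"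
    using not_adjacent_Suc_l[OF assms] segment_edge(2)[of "r - 1"] inner_vertex[of "r - 1"] by auto
  then have "\<exists>h. edge_injection EH (L (r - 1)) (L right_end) h"
    using segment_edge_injection(1)[of "r - 1"] not_adjacent_Suc_l[OF assms] card_right_end by simp
  then have "edge_injection EH (L (r - 1)) (L right_end) to_right"
    unfolding to_right_def by (rule someI_ex)
  then show "inj_on to_right (L (r - 1))" "to_right ` L (r - 1) \<subseteq> L right_end"
    "\<And>c y. c \<in> L (r - 1) \<Longrightarrow> y \<in> L right_end \<Longrightarrow> EH c y \<Longrightarrow> to_right c = y"
    unfolding edge_injection_def by auto
qed

definition through :: "'b \<Rightarrow> 'b" where
  "through c = to_right (carry (r - 1) c)"

lemma through:
  assumes "\<not> adjacent"
  shows "inj_on through (L (Suc l))" "through ` L (Suc l) \<subseteq> L right_end"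
proof -
  have carry_bij: "bij_betw (carry (r - 1)) (L (Suc l)) (L (r - 1))"
    using bij_betw_carry[of "r - 1"] not_adjacent_Suc_l[OF assms] by simp
  then have "inj_on (to_right \<circ> carry (r - 1)) (L (Suc l))"
    using comp_inj_on to_right(1)[OF assms] unfolding bij_betw_def by metis
  then show "inj_on through (L (Suc l))"
    unfolding through_def comp_def .
  show "through ` L (Suc l) \<subseteq> L right_end"
    using to_right(2)[OF assms] carry_bij unfolding through_def bij_betw_def by auto
qed

definition free_left :: 'b where
  "free_left = the_elem (L l - to_left ` L (Suc l))"

definition free_right :: 'b where
  "free_right = the_elem (L right_end - through ` L (Suc l))"

lemma free_left:
  assumes "\<not> adjacent"
  shows "L l - to_left ` L (Suc l) = {free_left}"
  unfolding free_left_def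
  using card_Diff_inj_image[OF _ card_left to_left(1)[OF assms] _ to_left(2)[OF assms]] inner_vertex[of "Suc l"]
    finite_lists l_less_n not_adjacent_Suc_l[OF assms] by simp

lemma free_right:
  assumes "\<not> adjacent"
  shows "L right_end - through ` L (Suc l) = {free_right}"
  unfolding free_right_def
  using card_Diff_inj_image[OF _ card_right_end through(1)[OF assms] _ through(2)[OF assms]] inner_vertex[of "Suc l"]
    finite_lists right_end_less_n not_adjacent_Suc_l[OF assms] by simp

definition special :: nat where
  "special = the_inv_into {0..<3} e free_left"

lemma special:
  assumes "\<not> adjacent"
  shows "special < 3" "e special = free_left"
proof -
  have "free_left \<in> e ` {0..<3}"
    using free_left[OF assms] labels unfolding bij_betw_def by blast
  then show "special < 3" "e special = free_left"
    using labels the_inv_into_into[of e "{0..<3}" free_left "{0..<3}"] f_the_inv_into_f[of e "{0..<3}"]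
    unfolding special_def bij_betw_def by auto
qed

definition start :: "nat \<Rightarrow> 'b" where
  "start b = the_inv_into (L (Suc l)) to_left (e (skip special b))"

lemma start:
  assumes "\<not> adjacent" "b < 2"
  shows "start b \<in> L (Suc l)" "to_left (start b) = e (skip special b)"
proof -
  have "skip special b < 3" "skip special b \<noteq> special"
    using skip_less[OF special(1)[OF assms(1)] assms(2)] skip_neq by auto
  then have "e (skip special b) \<in> L l - {free_left}"
    using label_in label_inject special[OF assms(1)] by fastforce
  then have "e (skip special b) \<in> to_left ` L (Suc l)"
    using free_left[OF assms(1)] by blast
  then show "start b \<in> L (Suc l)" "to_left (start b) = e (skip special b)"
    using to_left(1)[OF assms(1)] the_inv_into_into[of to_left "L (Suc l)" _ "L (Suc l)"]
      f_the_inv_into_f[of to_left "L (Suc l)"]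
    unfolding start_def by auto
qed

lemma start_inject:
  assumes "\<not> adjacent" "b < 2" "b' < 2" "start b = start b'"
  shows "b = b'"
proof -
  have "e (skip special b) = e (skip special b')"
    using start(2)[OF assms(1,2)] start(2)[OF assms(1,3)] assms(4) by simp
  then show ?thesis
    using label_inject skip_less special(1)[OF assms(1)] assms(2,3) skip_inject by metis
qed

lemma bij_betw_start:
  assumes "\<not> adjacent"
  shows "bij_betw start {0..<2} (L (Suc l))"
  using start_inject[OF assms] start(1)[OF assms] inner_vertex[of "Suc l"] not_adjacent_Suc_l[OF assms]
  by (intro inj_on_card_eq_imp_bij_betw) (auto intro: inj_onI)

definition right_label :: "nat \<Rightarrow> 'b" where
  "right_label z = (if adjacent then across (e z)
     else if z = special then free_right else through (start (1 - unskip special z)))"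

lemma right_label_in:
  assumes "z < 3"
  shows "right_label z \<in> L right_end"
proof (cases adjacent)
  case True
  then show ?thesis
    using bij_betw_apply[OF across(1)[OF True] label_in[OF assms]] unfolding right_label_def by simp
next
  case False
  have "free_right \<in> L right_end"
    using free_right[OF False] by blast
  moreover have "through (start (1 - unskip special z)) \<in> L right_end"
    using through(2)[OF False] start(1)[OF False, of "1 - unskip special z"] by auto
  ultimately show ?thesis
    using False unfolding right_label_def by simp
qed

lemma right_label_inject:
  assumes "\<not> adjacent" "z < 3" "z' < 3" "right_label z = right_label z'"
  shows "z = z'"
proof -
  have neq_free: "through (start (1 - unskip special w)) \<noteq> free_right" for w
  proof -
    have "through (start (1 - unskip special w)) \<in> through ` L (Suc l)"
      using start(1)[OF assms(1), of "1 - unskip special w"] by simp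
    then show ?thesis
      using free_right[OF assms(1)] by blast
  qed
  show ?thesis
  proof (cases "z = special"; cases "z' = special")
    assume "z = special" "z' \<noteq> special"
    then show ?thesis
      using assms(1,4) neq_free[of z'] unfolding right_label_def by simp
  next
    assume "z \<noteq> special" "z' = special"
    then show ?thesis
      using assms(1,4) neq_free[of z] unfolding right_label_def by simp
  next
    assume ne: "z \<noteq> special" "z' \<noteq> special"
    then have "through (start (1 - unskip special z)) = through (start (1 - unskip special z'))"
      using assms unfolding right_label_def by simp
    then have "start (1 - unskip special z) = start (1 - unskip special z')"
      using through(1)[OF assms(1)] start(1)[OF assms(1)] by (auto dest: inj_onD)
    then have "1 - unskip special z = 1 - unskip special z'"
      using start_inject[OF assms(1)] by simp
    moreover have "unskip special z < 2" "unskip special z' < 2"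
      using unskip_less special(1)[OF assms(1)] assms(2,3) ne by auto
    ultimately have "unskip special z = unskip special z'"
      by arith
    then show ?thesis
      using skip_unskip ne by metis
  qed simp
qed

lemma bij_betw_right_label: "bij_betw right_label {0..<3} (L right_end)"
proof (cases adjacent)
  case True
  then have "right_label = across \<circ> e"
    unfolding right_label_def by auto
  then show ?thesis
    using bij_betw_trans[OF labels across(1)[OF True]] by simp
next
  case False
  have "inj_on right_label {0..<3}"
    by (rule inj_onI) (use right_label_inject[OF False] in simp)
  moreover have "right_label ` {0..<3} \<subseteq> L right_end"
    using right_label_in by auto
  ultimately show ?thesis
    using finite_lists right_end_less_n card_right_end
    by (intro inj_on_card_eq_imp_bij_betw) auto
qed

definition code :: nat where
  "code = (if adjacent then 0 else Suc special)"

lemma code_less: "code < 4"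
  unfolding code_def using special(1) by auto

definition colour :: "nat \<Rightarrow> nat \<Rightarrow> nat \<Rightarrow> nat \<Rightarrow> 'b" where
  "colour x y b i = (if i = l then e x else if i = r then right_label y else carry i (start b))"

lemma bij_betw_inner_colour:
  assumes "l < i" "i < r"
  shows "bij_betw (\<lambda>b. carry i (start b)) {0..<2} (L i)"
proof -
  have "\<not> adjacent"
    using assms unfolding adjacent_def by auto
  then have "bij_betw (carry i \<circ> start) {0..<2} (L i)"
    using bij_betw_trans[OF bij_betw_start bij_betw_carry[of i]] assms by simp
  then show ?thesis
    by (simp add: comp_def)
qed

lemma no_edge_adjacent:
  assumes adjacent "x < 3" "y < 3" "y \<noteq> x"
  shows "\<not> EH (e x) (right_label y)"
proof
  assume "EH (e x) (right_label y)"
  then have "across (e x) = across (e y)"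
    using across[OF assms(1)] right_label_in[OF assms(3)] label_in[OF assms(2)] assms(1)
    unfolding right_label_def by auto
  then show False
    using across(1)[OF assms(1)] label_in label_inject assms(2-4)
    unfolding bij_betw_def inj_on_def by metis
qed

lemma no_edge_first:
  assumes "\<not> adjacent" "x < 3" "b < 2" "skip special b \<noteq> x"
  shows "\<not> EH (e x) (start b)"
proof
  assume "EH (e x) (start b)"
  then have "to_left (start b) = e x"
    using to_left(3)[OF assms(1) start(1)[OF assms(1,3)] label_in[OF assms(2)]]
      simple_graph_sym[OF corr_cover_simple_graph[OF cov]] by blast
  then show False
    using start(2)[OF assms(1,3)] label_inject[OF skip_less[OF special(1)[OF assms(1)] assms(3)] assms(2)]
      assms(4) by simp
qed

lemma no_edge_last:
  assumes "\<not> adjacent" "y < 3" "b < 2" "skip special (1 - b) \<noteq> y"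
  shows "\<not> EH (carry (r - 1) (start b)) (right_label y)"
proof
  have "bij_betw (carry (r - 1)) (L (Suc l)) (L (r - 1))"
    using bij_betw_carry[of "r - 1"] not_adjacent_Suc_l[OF assms(1)] by simp
  then have "carry (r - 1) (start b) \<in> L (r - 1)"
    using start(1)[OF assms(1,3)] by (rule bij_betw_apply)
  moreover assume "EH (carry (r - 1) (start b)) (right_label y)"
  ultimately have through_b: "through (start b) = right_label y"
    using to_right(3)[OF assms(1)] right_label_in[OF assms(2)] unfolding through_def by blast
  show False
  proof (cases "y = special")
    case True
    then show False
      using through_b free_right[OF assms(1)] start(1)[OF assms(1,3)] assms(1)
      unfolding right_label_def by auto
  next
    case False
    then have "through (start b) = through (start (1 - unskip special y))"
      using through_b assms(1) unfolding right_label_def by simp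
    then have "start b = start (1 - unskip special y)"
      using through(1)[OF assms(1)] start(1)[OF assms(1)] assms(3) by (auto dest: inj_onD)
    then have "b = 1 - unskip special y"
      using start_inject[OF assms(1) assms(3)] by simp
    then have "unskip special y = 1 - b"
      using unskip_less[OF assms(2) special(1)[OF assms(1)] False] by arith
    then show False
      using skip_unskip[OF False] assms(4) by simp
  qed
qed

lemma colour_in:
  assumes "x < 3" "y < 3" "b < 2" "l \<le> i" "i \<le> r"
  shows "colour x y b i \<in> L (i mod n)"
proof -
  consider "i = l" | "i = r" | "l < i" "i < r"
    using assms(4,5) by linarith
  then show ?thesis
  proof cases
    case 3
    then show ?thesis
      using bij_betw_inner_colour[OF 3] inner_vertex[OF 3] assms(3) l_less_r
      unfolding colour_def bij_betw_def by auto
  qed (use label_in right_label_in l_less_n assms l_less_r in \<open>auto simp: colour_def right_end_def\<close>)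
qed

lemma colour_no_edge:
  assumes "x < 3" "y < 3" "b < 2" and ok: "segment_ok code id x y b" and i: "l \<le> i" "i < r"
  shows "\<not> EH (colour x y b i) (colour x y b (Suc i))"
proof (cases adjacent)
  case True
  then show ?thesis
    using no_edge_adjacent[OF True assms(1,2)] ok i l_less_r
    unfolding segment_ok_def code_def colour_def adjacent_def by auto
next
  case False
  have ok': "skip special b \<noteq> x" "skip special (1 - b) \<noteq> y"
    using ok False unfolding segment_ok_def code_def by auto
  consider "i = l" | "l < i" "Suc i < r" | "l < i" "Suc i = r"
    using i by linarith
  then show ?thesis
  proof cases
    case 1
    then show ?thesis
      using no_edge_first[OF False assms(1,3) ok'(1)] not_adjacent_Suc_l[OF False] carry_first
      unfolding colour_def by auto
  next
    case 2
    moreover have "carry i (start b) \<in> L i"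
      using bij_betw_carry[of i] start(1)[OF False assms(3)] 2 unfolding bij_betw_def by auto
    ultimately show ?thesis
      using step(2) carry_Suc[of i] unfolding colour_def by auto
  next
    case 3
    then show ?thesis
      using no_edge_last[OF False assms(2,3) ok'(2)] unfolding colour_def by auto
  qed
qed

end

section \<open>Exactly three rich vertices\<close>

lemma card_bits_balanced:
  fixes a :: "nat \<Rightarrow> nat"
  assumes "\<forall>t<6. a t < 2" and "card {t\<in>{0..<6}. a t = 0} = 3" and "j < 2"
  shows "card {t\<in>{0..<6}. a t = j} = 3"
proof (cases "j = 0")
  case False
  then have "{t\<in>{0..<6}. a t = j} = {0..<6} - {t\<in>{0..<6}. a t = 0}"
    using assms(1,3) by auto
  moreover have "card ({0..<6::nat} - {t\<in>{0..<6}. a t = 0}) = 6 - 3"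
    using assms(2) by (subst card_Diff_subset) auto
  ultimately show ?thesis
    by simp
qed (use assms in simp)

lemma card_eq_via_bij:
  fixes a :: "nat \<Rightarrow> nat"
  assumes bij: "bij_betw \<phi> {0..<k} A" and eq: "\<forall>t<6. c t = \<phi> (a t)"
    and a: "\<forall>t<6. a t < k" and cnt: "\<forall>j<k. card {t\<in>{0..<6}. a t = j} = m" and y: "y \<in> A"
  shows "card {t\<in>{0..<6}. c t = y} = m"
proof -
  obtain j where j: "j < k" "\<phi> j = y"
    using y bij unfolding bij_betw_def by auto
  have "{t\<in>{0..<6}. c t = y} = {t\<in>{0..<6}. a t = j}"
  proof (intro set_eqI iffI)
    fix t assume "t \<in> {t\<in>{0..<6}. c t = y}"
    then have "t < 6" "\<phi> (a t) = \<phi> j"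
      using eq j by auto
    then show "t \<in> {t\<in>{0..<6}. a t = j}"
      using bij_betw_imp_inj_on[OF bij] a j(1) by (auto dest: inj_onD)
  qed (use eq j in auto)
  then show ?thesis
    using cnt j by simp
qed

locale three_rich_cycle =
  fixes n :: nat and L :: "nat \<Rightarrow> 'b set" and VH :: "'b set" and EH :: "'b \<Rightarrow> 'b \<Rightarrow> bool"
  assumes n3: "n \<ge> 3" and cov: "corr_cover {0..<n} (cycle_edge n) L VH EH"
    and sizes: "\<forall>v<n. finite (L v) \<and> (card (L v) = 2 \<or> card (L v) = 3)"
    and card_0: "card (L 0) = 3"
    and three_rich: "card {v\<in>{0..<n}. card (L v) = 3} = 3"
begin

definition rich :: "nat set" where
  "rich = {v\<in>{0..<n}. card (L v) = 3}"

definition b1 :: nat where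
  "b1 = Min (rich - {0})"

definition b2 :: nat where
  "b2 = Max (rich - {0})"

lemma rich_vertices:
  shows "0 < b1" "b1 < b2" "b2 < n" "card (L b1) = 3" "card (L b2) = 3"
    and "\<And>v. v < n \<Longrightarrow> v \<noteq> 0 \<Longrightarrow> v \<noteq> b1 \<Longrightarrow> v \<noteq> b2 \<Longrightarrow> card (L v) = 2"
proof -
  have "finite rich" "0 \<in> rich" "card rich = 3"
    unfolding rich_def using card_0 n3 three_rich by auto
  then have "card (rich - {0}) = 2"
    by (simp add: card_Diff_singleton)
  then obtain a c where ac: "rich - {0} = {a, c}" "a \<noteq> c"
    by (auto simp: card_2_iff)
  have b: "b1 = min a c" "b2 = max a c"
    unfolding b1_def b2_def ac(1) by auto
  have "b1 \<in> rich - {0}" "b2 \<in> rich - {0}"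
    unfolding b ac(1) by (auto simp: min_def max_def)
  then show "0 < b1" "b2 < n" "card (L b1) = 3" "card (L b2) = 3"
    unfolding rich_def by auto
  show "b1 < b2"
    using ac(2) unfolding b by auto
  show "card (L v) = 2" if "v < n" "v \<noteq> 0" "v \<noteq> b1" "v \<noteq> b2" for v
  proof -
    have "v \<notin> rich - {0}"
      using that ac(1) b by (auto simp: min_def max_def split: if_splits)
    then have "card (L v) \<noteq> 3"
      using that unfolding rich_def by auto
    then show ?thesis
      using sizes that by auto
  qed
qed

lemma finite_lists: "\<forall>v<n. finite (L v)"
  using sizes by auto

definition label0 :: "nat \<Rightarrow> 'b" where
  "label0 = (SOME e. bij_betw e {0..<3::nat} (L 0))"

lemma label0: "bij_betw label0 {0..<3} (L 0)"
proof -
  have "\<exists>e. bij_betw e {0..<3::nat} (L 0)"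
    using ex_bij_betw_nat_finite[of "L 0"] finite_lists card_0 n3 by simp
  then show ?thesis
    unfolding label0_def by (rule someI_ex)
qed

interpretation seg0: cycle_segment n L VH EH 0 b1 label0
  by (rule cycle_segment.intro) (use n3 cov rich_vertices finite_lists card_0 label0 in auto)

definition label1 :: "nat \<Rightarrow> 'b" where
  "label1 = seg0.right_label"

lemma label1: "bij_betw label1 {0..<3} (L b1)"
  using seg0.bij_betw_right_label rich_vertices unfolding label1_def seg0.right_end_def by simp

interpretation seg1: cycle_segment n L VH EH b1 b2 label1
  by (rule cycle_segment.intro) (use n3 cov rich_vertices finite_lists label1 in auto)

definition label2 :: "nat \<Rightarrow> 'b" where
  "label2 = seg1.right_label"

lemma label2: "bij_betw label2 {0..<3} (L b2)"
  using seg1.bij_betw_right_label rich_vertices unfolding label2_def seg1.right_end_def by simp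

interpretation seg2: cycle_segment n L VH EH b2 n label2
  by (rule cycle_segment.intro) (use n3 cov rich_vertices finite_lists label2 card_0 in auto)

text \<open>Going once around the cycle relabels \<open>L 0\<close> by a permutation of \<open>{0,1,2}\<close>.\<close>

definition return_label :: "nat \<Rightarrow> 'b" where
  "return_label = seg2.right_label"

lemma return_label: "bij_betw return_label {0..<3} (L 0)"
  using seg2.bij_betw_right_label unfolding return_label_def seg2.right_end_def by simp

definition return_perm :: "nat \<Rightarrow> nat" where
  "return_perm z = the_inv_into {0..<3} label0 (return_label z)"

lemma return_perm:
  assumes "z < 3"
  shows "return_perm z < 3" "label0 (return_perm z) = return_label z"
proof -
  have "return_label z \<in> label0 ` {0..<3}"
    using return_label label0 assms unfolding bij_betw_def by auto
  then show "return_perm z < 3" "label0 (return_perm z) = return_label z"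
    using the_inv_into_into[of label0 "{0..<3}" _ "{0..<3}"] f_the_inv_into_f[of label0 "{0..<3}"] label0
    unfolding return_perm_def bij_betw_def by auto
qed

lemma inj_on_return_perm: "inj_on return_perm {0..<3}"
proof (rule inj_onI)
  fix z z' assume "z \<in> {0..<3}" "z' \<in> {0..<3}" "return_perm z = return_perm z'"
  then show "z = z'"
    using return_perm(2)[of z] return_perm(2)[of z'] return_label
    by (auto simp: bij_betw_def dest: inj_onD)
qed

definition perm_index :: nat where
  "perm_index = (SOME p. p < 6 \<and> (\<forall>z<3. perms3 ! p ! z = return_perm z))"

lemma perm_index: "perm_index < 6" "\<And>z. z < 3 \<Longrightarrow> perms3 ! perm_index ! z = return_perm z"
proof -
  have "\<exists>p. p < 6 \<and> (\<forall>z<3. perms3 ! p ! z = return_perm z)"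
    using perms3_complete[OF _ inj_on_return_perm] return_perm(1) by auto
  from someI_ex[OF this] show "perm_index < 6" "\<And>z. z < 3 \<Longrightarrow> perms3 ! perm_index ! z = return_perm z"
    unfolding perm_index_def by auto
qed

definition layers :: "layer list" where
  "layers = (SOME W. balanced seg0.code seg1.code seg2.code W \<and>
     list_all (layer_ok seg0.code seg1.code perm_index seg2.code) W)"

lemma layers:
  "balanced seg0.code seg1.code seg2.code layers"
  "list_all (layer_ok seg0.code seg1.code perm_index seg2.code) layers"
  using someI_ex[OF balanced_layers_exist[OF seg0.code_less seg1.code_less perm_index(1) seg2.code_less]]
  unfolding layers_def by auto

lemma length_layers: "length layers = 6"
  using layers(1) unfolding balanced_def by simp

definition lab0 :: "nat \<Rightarrow> nat" where "lab0 t = fst (layers ! t)"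
definition lab1 :: "nat \<Rightarrow> nat" where "lab1 t = fst (snd (layers ! t))"
definition lab2 :: "nat \<Rightarrow> nat" where "lab2 t = fst (snd (snd (layers ! t)))"
definition bit0 :: "nat \<Rightarrow> nat" where "bit0 t = fst (snd (snd (snd (layers ! t))))"
definition bit1 :: "nat \<Rightarrow> nat" where "bit1 t = fst (snd (snd (snd (snd (layers ! t)))))"
definition bit2 :: "nat \<Rightarrow> nat" where "bit2 t = snd (snd (snd (snd (snd (layers ! t)))))"

lemma layers_nth: "layers ! t = (lab0 t, lab1 t, lab2 t, bit0 t, bit1 t, bit2 t)"
  unfolding lab0_def lab1_def lab2_def bit0_def bit1_def bit2_def by simp

lemma layer_ok_nth:
  assumes "t < 6"
  shows "lab0 t < 3" "lab1 t < 3" "lab2 t < 3" "bit0 t < 2" "bit1 t < 2" "bit2 t < 2"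
    "segment_ok seg0.code id (lab0 t) (lab1 t) (bit0 t)"
    "segment_ok seg1.code id (lab1 t) (lab2 t) (bit1 t)"
    "segment_ok seg2.code (\<lambda>z. perms3 ! perm_index ! z) (lab2 t) (lab0 t) (bit2 t)"
proof -
  have "layer_ok seg0.code seg1.code perm_index seg2.code (layers ! t)"
    using layers(2) assms length_layers by (simp add: list_all_length)
  then show "lab0 t < 3" "lab1 t < 3" "lab2 t < 3" "bit0 t < 2" "bit1 t < 2" "bit2 t < 2"
    "segment_ok seg0.code id (lab0 t) (lab1 t) (bit0 t)"
    "segment_ok seg1.code id (lab1 t) (lab2 t) (bit1 t)"
    "segment_ok seg2.code (\<lambda>z. perms3 ! perm_index ! z) (lab2 t) (lab0 t) (bit2 t)"
    unfolding layers_nth layer_ok_def by auto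
qed

definition closing_label :: "nat \<Rightarrow> nat" where
  "closing_label t = the_inv_into {0..<3} return_label (label0 (lab0 t))"

lemma closing_label:
  assumes "t < 6"
  shows "closing_label t < 3" "return_label (closing_label t) = label0 (lab0 t)"
    "return_perm (closing_label t) = lab0 t"
proof -
  have "label0 (lab0 t) \<in> return_label ` {0..<3}"
    using label0 return_label layer_ok_nth(1)[OF assms] unfolding bij_betw_def by auto
  then show lt: "closing_label t < 3" and eq: "return_label (closing_label t) = label0 (lab0 t)"
    using the_inv_into_into[of return_label "{0..<3}" _ "{0..<3}"] f_the_inv_into_f[of return_label "{0..<3}"]
      return_label unfolding closing_label_def bij_betw_def by auto
  show "return_perm (closing_label t) = lab0 t"
    using return_perm[OF lt] eq label0 layer_ok_nth(1)[OF assms]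
    unfolding bij_betw_def inj_on_def by auto
qed

lemma closing_segment_ok:
  assumes "t < 6"
  shows "segment_ok seg2.code id (lab2 t) (closing_label t) (bit2 t)"
proof (cases "seg2.code = 0")
  case True
  then show ?thesis
    using layer_ok_nth(9)[OF assms] perm_index(2)[OF layer_ok_nth(3)[OF assms]] closing_label(3)[OF assms]
    unfolding segment_ok_def by auto
next
  case False
  then have "skip (seg2.code - 1) (1 - bit2 t) < 3"
    using seg2.code_less by (intro skip_less) auto
  then show ?thesis
    using layer_ok_nth(9)[OF assms] False perm_index(2) closing_label(3)[OF assms]
    unfolding segment_ok_def by auto
qed

definition colouring :: "nat \<Rightarrow> nat \<Rightarrow> 'b" where
  "colouring t v = (if v \<le> b1 then seg0.colour (lab0 t) (lab1 t) (bit0 t) v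
     else if v \<le> b2 then seg1.colour (lab1 t) (lab2 t) (bit1 t) v
     else seg2.colour (lab2 t) (closing_label t) (bit2 t) v)"

lemma colouring_seg0: "v \<le> b1 \<Longrightarrow> colouring t v = seg0.colour (lab0 t) (lab1 t) (bit0 t) v"
  unfolding colouring_def by simp

lemma colouring_seg1:
  assumes "b1 \<le> v" "v \<le> b2"
  shows "colouring t v = seg1.colour (lab1 t) (lab2 t) (bit1 t) v"
proof (cases "v = b1")
  case True
  then show ?thesis
    using rich_vertices(1)
    unfolding colouring_def seg0.colour_def seg1.colour_def label1_def[symmetric] by simp
qed (use assms in \<open>simp add: colouring_def\<close>)

lemma colouring_seg2:
  assumes "b2 \<le> v" "v < n"
  shows "colouring t v = seg2.colour (lab2 t) (closing_label t) (bit2 t) v"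
proof (cases "v = b2")
  case True
  then show ?thesis
    using rich_vertices(1,2)
    unfolding colouring_def seg1.colour_def seg2.colour_def label2_def[symmetric] by simp
qed (use assms rich_vertices(1,2) in \<open>simp add: colouring_def\<close>)

lemma colouring_0: "t < 6 \<Longrightarrow> colouring t 0 = seg2.colour (lab2 t) (closing_label t) (bit2 t) n"
  using closing_label(2) rich_vertices(2,3)
  unfolding colouring_def seg0.colour_def seg2.colour_def return_label_def by auto

lemma colouring_no_edge:
  assumes t: "t < 6" and i: "i < n"
  shows "\<not> EH (colouring t i) (colouring t (Suc i mod n))"
proof -
  note l = layer_ok_nth[OF t]
  consider "i < b1" | "b1 \<le> i" "i < b2" | "b2 \<le> i" "Suc i < n" | "Suc i = n"
    using i by linarith
  then show ?thesis
  proof cases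
    case 1
    then show ?thesis
      using seg0.colour_no_edge[of "lab0 t" "lab1 t" "bit0 t" i] l rich_vertices(2,3)
        colouring_seg0[of i t] colouring_seg0[of "Suc i" t] by simp
  next
    case 2
    then show ?thesis
      using seg1.colour_no_edge[of "lab1 t" "lab2 t" "bit1 t" i] l rich_vertices(3)
        colouring_seg1[of i t] colouring_seg1[of "Suc i" t] by simp
  next
    case 3
    then show ?thesis
      using seg2.colour_no_edge[of "lab2 t" "closing_label t" "bit2 t" i] l closing_label[OF t]
        closing_segment_ok[OF t] colouring_seg2[of i t] colouring_seg2[of "Suc i" t] by simp
  next
    case 4
    then show ?thesis
      using seg2.colour_no_edge[of "lab2 t" "closing_label t" "bit2 t" i] l closing_label[OF t]
        closing_segment_ok[OF t] colouring_seg2[of i t] colouring_0[OF t] rich_vertices(3) by simp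
  qed
qed

lemma card_layers_filter: "card {t\<in>{0..<6}. P (layers ! t)} = length (filter P layers)"
proof -
  have "{i. i < length layers \<and> P (layers ! i)} = {t\<in>{0..<6}. P (layers ! t)}"
    using length_layers by auto
  then show ?thesis
    using length_filter_conv_card[of P layers] by simp
qed

lemma card_layers_label:
  assumes "j < 3"
  shows "card {t\<in>{0..<6}. lab0 t = j} = 2" "card {t\<in>{0..<6}. lab1 t = j} = 2"
    "card {t\<in>{0..<6}. lab2 t = j} = 2"
proof -
  have "j \<in> {0, 1, 2}"
    using assms by auto
  then have "length (filter (\<lambda>(x0, x1, x2, b0, b1, b2). x0 = j) layers) = 2"
    "length (filter (\<lambda>(x0, x1, x2, b0, b1, b2). x1 = j) layers) = 2"
    "length (filter (\<lambda>(x0, x1, x2, b0, b1, b2). x2 = j) layers) = 2"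
    using layers(1) unfolding balanced_def by blast+
  moreover have "{t\<in>{0..<6}. lab0 t = j} = {t\<in>{0..<6}. (\<lambda>(x0, x1, x2, b0, b1, b2). x0 = j) (layers ! t)}"
    "{t\<in>{0..<6}. lab1 t = j} = {t\<in>{0..<6}. (\<lambda>(x0, x1, x2, b0, b1, b2). x1 = j) (layers ! t)}"
    "{t\<in>{0..<6}. lab2 t = j} = {t\<in>{0..<6}. (\<lambda>(x0, x1, x2, b0, b1, b2). x2 = j) (layers ! t)}"
    by (simp_all only: layers_nth prod.case)
  ultimately show "card {t\<in>{0..<6}. lab0 t = j} = 2" "card {t\<in>{0..<6}. lab1 t = j} = 2"
    "card {t\<in>{0..<6}. lab2 t = j} = 2"
    by (simp_all only: card_layers_filter)
qed

lemma card_layers_bit: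
  assumes "j < 2"
  shows "seg0.code \<noteq> 0 \<Longrightarrow> card {t\<in>{0..<6}. bit0 t = j} = 3"
    "seg1.code \<noteq> 0 \<Longrightarrow> card {t\<in>{0..<6}. bit1 t = j} = 3"
    "seg2.code \<noteq> 0 \<Longrightarrow> card {t\<in>{0..<6}. bit2 t = j} = 3"
proof -
  have bits: "card {t\<in>{0..<6}. bit0 t = 0} = length (filter (\<lambda>(x0, x1, x2, b0, b1, b2). b0 = 0) layers)"
    "card {t\<in>{0..<6}. bit1 t = 0} = length (filter (\<lambda>(x0, x1, x2, b0, b1, b2). b1 = 0) layers)"
    "card {t\<in>{0..<6}. bit2 t = 0} = length (filter (\<lambda>(x0, x1, x2, b0, b1, b2). b2 = 0) layers)"
    by (simp_all only: layers_nth prod.case flip: card_layers_filter)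
  show "seg0.code \<noteq> 0 \<Longrightarrow> card {t\<in>{0..<6}. bit0 t = j} = 3"
    using card_bits_balanced[of bit0, OF _ _ assms] layer_ok_nth(4) layers(1) bits(1)
    unfolding balanced_def by auto
  show "seg1.code \<noteq> 0 \<Longrightarrow> card {t\<in>{0..<6}. bit1 t = j} = 3"
    using card_bits_balanced[of bit1, OF _ _ assms] layer_ok_nth(5) layers(1) bits(2)
    unfolding balanced_def by auto
  show "seg2.code \<noteq> 0 \<Longrightarrow> card {t\<in>{0..<6}. bit2 t = j} = 3"
    using card_bits_balanced[of bit2, OF _ _ assms] layer_ok_nth(6) layers(1) bits(3)
    unfolding balanced_def by auto
qed

lemma card_colouring_rich:
  assumes v: "v \<in> {0, b1, b2}" and y: "y \<in> L v"
  shows "card {t\<in>{0..<6}. colouring t v = y} * card (L v) = 6"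
proof -
  consider "v = 0" | "v = b1" | "v = b2"
    using v by blast
  then show ?thesis
  proof cases
    case 1
    have "card {t\<in>{0..<6}. colouring t v = y} = 2"
    proof (rule card_eq_via_bij[OF label0])
      show "\<forall>t<6. colouring t v = label0 (lab0 t)"
        using 1 unfolding colouring_def seg0.colour_def by simp
    qed (use layer_ok_nth(1) card_layers_label(1) y 1 in auto)
    then show ?thesis
      using 1 card_0 by simp
  next
    case 2
    have "card {t\<in>{0..<6}. colouring t v = y} = 2"
    proof (rule card_eq_via_bij[OF label1])
      show "\<forall>t<6. colouring t v = label1 (lab1 t)"
        using 2 colouring_seg1 rich_vertices unfolding seg1.colour_def by simp
    qed (use layer_ok_nth(2) card_layers_label(2) y 2 in auto)
    then show ?thesis
      using 2 rich_vertices by simp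
  next
    case 3
    have "card {t\<in>{0..<6}. colouring t v = y} = 2"
    proof (rule card_eq_via_bij[OF label2])
      show "\<forall>t<6. colouring t v = label2 (lab2 t)"
        using 3 colouring_seg2 rich_vertices unfolding seg2.colour_def by simp
    qed (use layer_ok_nth(3) card_layers_label(3) y 3 in auto)
    then show ?thesis
      using 3 rich_vertices by simp
  qed
qed

lemma card_colouring_inner:
  assumes v: "v < n" "v \<notin> {0, b1, b2}" and y: "y \<in> L v"
  shows "card {t\<in>{0..<6}. colouring t v = y} * card (L v) = 6"
proof -
  consider "0 < v" "v < b1" | "b1 < v" "v < b2" | "b2 < v"
    using v(2) by (cases "v < b1"; cases "v < b2") auto
  then show ?thesis
  proof cases
    case 1
    have "seg0.code \<noteq> 0"
      using 1 unfolding seg0.code_def seg0.adjacent_def by auto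
    have "card {t\<in>{0..<6}. colouring t v = y} = 3"
    proof (rule card_eq_via_bij[OF seg0.bij_betw_inner_colour[of v]])
      show "\<forall>t<6. colouring t v = seg0.carry v (seg0.start (bit0 t))"
        using 1 colouring_seg0 unfolding seg0.colour_def by simp
    qed (use \<open>seg0.code \<noteq> 0\<close> layer_ok_nth(4) card_layers_bit(1) 1 y in auto)
    then show ?thesis
      using rich_vertices(6)[OF v(1)] v(2) by simp
  next
    case 2
    have "seg1.code \<noteq> 0"
      using 2 unfolding seg1.code_def seg1.adjacent_def by auto
    have "card {t\<in>{0..<6}. colouring t v = y} = 3"
    proof (rule card_eq_via_bij[OF seg1.bij_betw_inner_colour[of v]])
      show "\<forall>t<6. colouring t v = seg1.carry v (seg1.start (bit1 t))"
        using 2 colouring_seg1 unfolding seg1.colour_def by simp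
    qed (use \<open>seg1.code \<noteq> 0\<close> layer_ok_nth(5) card_layers_bit(2) 2 y in auto)
    then show ?thesis
      using rich_vertices(6)[OF v(1)] v(2) by simp
  next
    case 3
    have "seg2.code \<noteq> 0"
      using 3 v unfolding seg2.code_def seg2.adjacent_def by auto
    have "card {t\<in>{0..<6}. colouring t v = y} = 3"
    proof (rule card_eq_via_bij[OF seg2.bij_betw_inner_colour[of v]])
      show "\<forall>t<6. colouring t v = seg2.carry v (seg2.start (bit2 t))"
        using 3 v colouring_seg2 unfolding seg2.colour_def by simp
    qed (use \<open>seg2.code \<noteq> 0\<close> layer_ok_nth(6) card_layers_bit(3) 3 y v in auto)
    then show ?thesis
      using rich_vertices(6)[OF v(1)] v(2) by simp
  qed
qed

lemma card_colouring:
  assumes "v < n" "y \<in> L v"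
  shows "card {t\<in>{0..<6}. colouring t v = y} * card (L v) = 6"
  using card_colouring_rich card_colouring_inner assms by blast

lemma colouring_in:
  assumes "t < 6" "v < n"
  shows "colouring t v \<in> L v"
proof -
  note l = layer_ok_nth[OF assms(1)]
  consider "v \<le> b1" | "b1 \<le> v" "v \<le> b2" | "b2 \<le> v"
    by linarith
  then show ?thesis
  proof cases
    case 1
    then show ?thesis
      using seg0.colour_in[OF l(1,2,4)] colouring_seg0 assms(2) by fastforce
  next
    case 2
    then show ?thesis
      using seg1.colour_in[OF l(2,3,5)] colouring_seg1 assms(2) by fastforce
  next
    case 3
    then show ?thesis
      using seg2.colour_in[OF l(3) closing_label(1)[OF assms(1)] l(6)] colouring_seg2 assms(2)
      by fastforce
  qed
qed

definition transversal :: "nat \<Rightarrow> 'b set" where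
  "transversal t = colouring t ` {0..<n}"

lemma mem_transversal:
  assumes t: "t < 6" and v: "v < n" and y: "y \<in> L v"
  shows "y \<in> transversal t \<longleftrightarrow> colouring t v = y"
proof
  assume "y \<in> transversal t"
  then obtain w where w: "w < n" "y = colouring t w"
    unfolding transversal_def by auto
  then have "y \<in> L w"
    using colouring_in[OF t] by simp
  then have "w = v"
    using corr_cover_disjoint[OF cov, of w v] w(1) v y by auto
  then show "colouring t v = y"
    using w by simp
qed (use v in \<open>auto simp: transversal_def\<close>)

lemma indep_transversal_transversal:
  assumes t: "t < 6"
  shows "indep_transversal {0..<n} L VH EH (transversal t)"
proof -
  have sg: "simple_graph VH EH"
    using corr_cover_simple_graph[OF cov] .
  have "\<not> EH (colouring t u) (colouring t w)" if "u < n" "w < n" for u w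
  proof (cases "cycle_edge n u w")
    case True
    then consider "w = Suc u mod n" | "u = Suc w mod n"
      unfolding cycle_edge_def by auto
    then show ?thesis
      using colouring_no_edge[OF t] simple_graph_sym[OF sg] that by cases blast+
  next
    case False
    then show ?thesis
      using corr_cover_non_edge[OF cov] simple_graph_irrefl[OF sg] colouring_in[OF t] that
      by (cases "u = w") auto
  qed
  moreover have "transversal t \<inter> L v = {colouring t v}" if "v < n" for v
    using mem_transversal[OF t that] colouring_in[OF t that] by auto
  moreover have "transversal t \<subseteq> VH"
    using colouring_in[OF t] corr_cover_Union[OF cov] unfolding transversal_def by auto
  ultimately show ?thesis
    unfolding indep_transversal_def transversal_def by auto
qed

theorem has_fractional_packing: "has_fractional_packing {0..<n} L VH EH"
proof -
  define p where "p = map_pmf transversal (pmf_of_set {0..<6::nat})"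
  have "measure_pmf.prob p {I. y \<in> I} = 1 / real (card (L v))" if "v < n" "y \<in> L v" for v y
  proof -
    have "measure_pmf.prob p {I. y \<in> I} = card ({0..<6} \<inter> transversal -` {I. y \<in> I}) / 6"
      unfolding p_def by (simp add: measure_pmf_of_set)
    also have "{0..<6} \<inter> transversal -` {I. y \<in> I} = {t\<in>{0..<6}. colouring t v = y}"
      using mem_transversal that by auto
    finally have "measure_pmf.prob p {I. y \<in> I} = card {t\<in>{0..<6}. colouring t v = y} / 6" .
    moreover have "real (card {t\<in>{0..<6}. colouring t v = y}) * real (card (L v)) = 6"
      using card_colouring[OF that] by (metis of_nat_mult of_nat_numeral)
    then have "real (card {t\<in>{0..<6}. colouring t v = y}) = 6 / real (card (L v))"
      by (metis nonzero_eq_divide_eq mult_zero_right zero_neq_numeral)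
    ultimately show ?thesis
      by simp
  qed
  moreover have "indep_transversal {0..<n} L VH EH I" if "I \<in> set_pmf p" for I
    using that indep_transversal_transversal unfolding p_def by auto
  ultimately show ?thesis
    unfolding has_fractional_packing_def by (intro exI[of _ p]) auto
qed

end

section \<open>Reduction to three rich vertices\<close>

definition cycle_rotate :: "nat \<Rightarrow> nat \<Rightarrow> nat \<Rightarrow> nat" where
  "cycle_rotate n r i = (i + r) mod n"

lemma cycle_rotate_Suc_mod: "cycle_rotate n r (Suc u mod n) = Suc (cycle_rotate n r u) mod n"
  unfolding cycle_rotate_def by (simp add: mod_Suc_eq mod_add_left_eq)

lemma inj_on_cycle_rotate: "r < n \<Longrightarrow> inj_on (cycle_rotate n r) {0..<n}"
  unfolding cycle_rotate_def inj_on_def by (auto simp: mod_if split: if_splits)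

lemma bij_betw_cycle_rotate:
  assumes "r < n"
  shows "bij_betw (cycle_rotate n r) {0..<n} {0..<n}"
  using inj_on_cycle_rotate[OF assms] assms
  by (intro inj_on_card_eq_imp_bij_betw) (auto simp: cycle_rotate_def)

lemma cycle_edge_rotate:
  assumes "r < n" "u < n" "v < n"
  shows "cycle_edge n (cycle_rotate n r u) (cycle_rotate n r v) = cycle_edge n u v"
proof -
  have "cycle_rotate n r v = cycle_rotate n r (Suc u mod n) \<longleftrightarrow> v = Suc u mod n"
    "cycle_rotate n r u = cycle_rotate n r (Suc v mod n) \<longleftrightarrow> u = Suc v mod n"
    using inj_on_cycle_rotate[OF assms(1)] assms(2,3) unfolding inj_on_def by auto
  then show ?thesis
    using assms(2,3) unfolding cycle_edge_def cycle_rotate_Suc_mod by (auto simp: cycle_rotate_def)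
qed

lemma fractional_packing_three_rich:
  assumes n3: "n \<ge> 3" and cov: "corr_cover {0..<n} (cycle_edge n) L VH EH"
    and sizes: "\<forall>v<n. finite (L v) \<and> (card (L v) = 2 \<or> card (L v) = 3)"
    and three_rich: "card {v\<in>{0..<n}. card (L v) = 3} = 3"
  shows "has_fractional_packing {0..<n} L VH EH"
proof -
  have "{v\<in>{0..<n}. card (L v) = 3} \<noteq> {}"
    using three_rich by (metis card.empty zero_neq_numeral)
  then obtain r where r: "r < n" "card (L r) = 3"
    by auto
  have bij: "bij_betw (cycle_rotate n r) {0..<n} {0..<n}"
    using bij_betw_cycle_rotate[OF r(1)] .
  have rotate_less: "cycle_rotate n r v < n" for v
    using r(1) by (simp add: cycle_rotate_def)
  have "three_rich_cycle n (L \<circ> cycle_rotate n r) VH EH"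
  proof
    show "n \<ge> 3"
      using n3 .
    show "corr_cover {0..<n} (cycle_edge n) (L \<circ> cycle_rotate n r) VH EH"
      using corr_cover_comp_automorphism[OF cov bij] cycle_edge_rotate[OF r(1)] by simp
    show "\<forall>v<n. finite ((L \<circ> cycle_rotate n r) v) \<and>
        (card ((L \<circ> cycle_rotate n r) v) = 2 \<or> card ((L \<circ> cycle_rotate n r) v) = 3)"
      using sizes rotate_less by simp
    show "card ((L \<circ> cycle_rotate n r) 0) = 3"
      using r by (simp add: cycle_rotate_def)
    show "card {v\<in>{0..<n}. card ((L \<circ> cycle_rotate n r) v) = 3} = 3"
      using card_bij_betw_preimage[OF bij, of "\<lambda>v. card (L v) = 3"] three_rich by simp
  qed
  then show ?thesis
    using has_fractional_packing_comp_automorphism[OF _ bij] three_rich_cycle.has_fractional_packing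
    by blast
qed

text \<open>A vertex whose list may lose a colour without dropping below three lists of size 3.\<close>

definition deletable :: "nat \<Rightarrow> (nat \<Rightarrow> 'b set) \<Rightarrow> nat \<Rightarrow> bool" where
  "deletable n L v \<longleftrightarrow> v < n \<and> card (L v) \<ge> 3 \<and>
     (card (L v) \<ge> 4 \<or> card {u\<in>{0..<n}. card (L u) \<ge> 3} \<ge> 4)"

lemma cycle_cover_delete_colour:
  assumes cov: "corr_cover {0..<n} (cycle_edge n) L VH EH"
    and sizes: "\<forall>v\<in>{0..<n}. finite (L v) \<and> card (L v) \<ge> 2"
    and rich: "card {v\<in>{0..<n}. card (L v) \<ge> 3} \<ge> 3"
    and "deletable n L v" and x: "x \<in> L v"
  defines "L' \<equiv> L(v := L v - {x})"
  shows "corr_cover {0..<n} (cycle_edge n) L' (VH - {x}) (edges_avoiding EH x)"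
    and "\<forall>u\<in>{0..<n}. finite (L' u) \<and> card (L' u) \<ge> 2"
    and "card {u\<in>{0..<n}. card (L' u) \<ge> 3} \<ge> 3"
    and "(\<Sum>u<n. card (L' u)) < (\<Sum>u<n. card (L u))"
proof -
  have v: "v < n" "card (L v) \<ge> 3" "card (L v) \<ge> 4 \<or> card {u\<in>{0..<n}. card (L u) \<ge> 3} \<ge> 4"
    using \<open>deletable n L v\<close> unfolding deletable_def by auto
  have card_v: "card (L' v) = card (L v) - 1"
    using sizes v(1) x unfolding L'_def by simp
  show "corr_cover {0..<n} (cycle_edge n) L' (VH - {x}) (edges_avoiding EH x)"
    unfolding L'_def using corr_cover_delete_colour[OF cov] v(1) x by simp
  show "\<forall>u\<in>{0..<n}. finite (L' u) \<and> card (L' u) \<ge> 2"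
    using sizes card_v v(2) unfolding L'_def by auto
  show "card {u\<in>{0..<n}. card (L' u) \<ge> 3} \<ge> 3"
  proof (cases "card (L v) \<ge> 4")
    case True
    then have "{u\<in>{0..<n}. card (L' u) \<ge> 3} = {u\<in>{0..<n}. card (L u) \<ge> 3}"
      using card_v unfolding L'_def by auto
    then show ?thesis
      using rich by simp
  next
    case False
    then have "{u\<in>{0..<n}. card (L' u) \<ge> 3} = {u\<in>{0..<n}. card (L u) \<ge> 3} - {v}"
      using card_v unfolding L'_def by auto
    then show ?thesis
      using False v by (simp add: card_Diff_singleton)
  qed
  show "(\<Sum>u<n. card (L' u)) < (\<Sum>u<n. card (L u))"
  proof (rule sum_strict_mono_ex1)
    show "\<forall>u\<in>{..<n}. card (L' u) \<le> card (L u)"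
      using sizes by (auto simp: L'_def card_mono)
    show "\<exists>u\<in>{..<n}. card (L' u) < card (L u)"
      using card_v v by force
  qed simp
qed

lemma three_rich_if_not_deletable:
  assumes sizes: "\<forall>v\<in>{0..<n}. finite (L v) \<and> card (L v) \<ge> 2"
    and rich: "card {v\<in>{0..<n}. card (L v) \<ge> 3} \<ge> 3"
    and not_deletable: "\<nexists>v. deletable n L v"
  shows "\<forall>u<n. finite (L u) \<and> (card (L u) = 2 \<or> card (L u) = 3)"
    and "card {u\<in>{0..<n}. card (L u) = 3} = 3"
proof -
  have "{u\<in>{0..<n}. card (L u) \<ge> 3} \<noteq> {}"
    using rich by (metis card.empty not_numeral_le_zero)
  then obtain v where v: "v < n" "card (L v) \<ge> 3"
    by auto
  have le3: "\<forall>u<n. card (L u) \<le> 3"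
    using not_deletable unfolding deletable_def by force
  then show "\<forall>u<n. finite (L u) \<and> (card (L u) = 2 \<or> card (L u) = 3)"
    using sizes by force
  have "{u\<in>{0..<n}. card (L u) \<ge> 3} = {u\<in>{0..<n}. card (L u) = 3}"
    using le3 by auto
  moreover have "card {u\<in>{0..<n}. card (L u) \<ge> 3} \<le> 3"
    using not_deletable v unfolding deletable_def by force
  ultimately show "card {u\<in>{0..<n}. card (L u) = 3} = 3"
    using rich by simp
qed

theorem mainTheorem14:
  fixes n :: nat and L :: "nat \<Rightarrow> 'b set" and VH :: "'b set" and EH :: "'b \<Rightarrow> 'b \<Rightarrow> bool"
  assumes "n \<ge> 3"
    and "corr_cover {0..<n} (cycle_edge n) L VH EH"
    and "\<forall>v\<in>{0..<n}. finite (L v) \<and> card (L v) \<ge> 2"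
    and "card {v\<in>{0..<n}. card (L v) \<ge> 3} \<ge> 3"
  shows "has_fractional_packing {0..<n} L VH EH"
  using assms(2-)
proof (induction "\<Sum>u<n. card (L u)" arbitrary: L VH EH rule: less_induct)
  case less
  show ?case
  proof (cases "\<exists>v. deletable n L v")
    case True
    then obtain v where v: "deletable n L v"
      by blast
    show ?thesis
      using fractional_packing_from_deletions[OF less.prems(1)] v less.prems(2)
        less.hyps[OF cycle_cover_delete_colour(4,1-3)[OF less.prems v]]
      unfolding deletable_def by fastforce
  next
    case False
    then show ?thesis
      using fractional_packing_three_rich[OF assms(1) less.prems(1)]
        three_rich_if_not_deletable[OF less.prems(2,3)] by blast
  qed
qed

end
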